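(* For integers $n\ge 2$ and $0\le k\le n-1$, let $\mathrm{TH}_k:\{0,1\}^n\rightarrow\{0,1\}$ be defined by $\mathrm{TH}_k(x)=1$ iff $|x|>k$, where $|x|$ is the Hamming weight. Then $UC(\mathrm{TH}_k)=UQ(\mathrm{TH}_k)=1$, and $WUC(\mathrm{TH}_k)=WUQ(\mathrm{TH}_k)=\Theta(\log n)$, i.e. there are constants $c_1,c_2>0$ (independent of $n,k$) such that $c_1\log n\le WUQ(\mathrm{TH}_k)\le WUC(\mathrm{TH}_k)\le c_2\log n$ for all sufficiently large $n$ and all $0\le k\le n-1$.
   Context: Query model: a classical randomized query algorithm adaptively queries input bits $x_i$ (each query costs one) and outputs a bit; a quantum query algorithm alternates input-independent unitaries with the oracle $O_x:|i,b,z\rangle\mapsto|i,b\oplus x_i,z\rangle$ and measures an output bit. $UQ(f)$ (resp. $UC(f)$) is the minimum number of queries of a quantum (resp. classical randomized) algorithm that on every input outputs $f(x)$ with probability strictly greater than $1/2$. For an algorithm whose minimum over inputs of the success probability is $p>1/2$, its bias is $\beta=p-1/2$ and its weakly unbounded cost is (number of queries) $+\log(1/(2\beta))$; $WUQ(f)$ (resp. $WUC(f)$) is the minimum weakly unbounded cost over quantum (resp. classical randomized) algorithms. $\log$ is base 2. *)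

theory Defs
  imports "HOL-Probability.Probability" "Jordan_Normal_Form.Schur_Decomposition"
begin

definition inputs :: "nat \<Rightarrow> bool list set" where
  "inputs n = {x. length x = n}"

definition TH :: "nat \<Rightarrow> bool list \<Rightarrow> bool" where
  "TH k x = (count_list x True > k)"

datatype dtree = Leaf bool | Query nat dtree dtree

fun dt_eval :: "dtree \<Rightarrow> bool list \<Rightarrow> bool" where
  "dt_eval (Leaf b) x = b"
| "dt_eval (Query i t0 t1) x = (if x ! i then dt_eval t1 x else dt_eval t0 x)"

fun dt_depth :: "dtree \<Rightarrow> nat" where
  "dt_depth (Leaf b) = 0"
| "dt_depth (Query i t0 t1) = Suc (max (dt_depth t0) (dt_depth t1))"

fun dt_vars :: "dtree \<Rightarrow> nat set" where
  "dt_vars (Leaf b) = {}"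
| "dt_vars (Query i t0 t1) = insert i (dt_vars t0 \<union> dt_vars t1)"

definition cl_alg :: "nat \<Rightarrow> nat \<Rightarrow> dtree pmf \<Rightarrow> bool" where
  "cl_alg n q D \<longleftrightarrow> (\<forall>T\<in>set_pmf D. dt_depth T \<le> q \<and> dt_vars T \<subseteq> {..<n})"

definition cl_succ :: "dtree pmf \<Rightarrow> (bool list \<Rightarrow> bool) \<Rightarrow> bool list \<Rightarrow> real" where
  "cl_succ D f x = measure_pmf.prob D {T. dt_eval T x = f x}"

definition cl_min_succ :: "nat \<Rightarrow> (bool list \<Rightarrow> bool) \<Rightarrow> dtree pmf \<Rightarrow> real" where
  "cl_min_succ n f D = Min ((\<lambda>x. cl_succ D f x) ` inputs n)"

definition UC :: "nat \<Rightarrow> (bool list \<Rightarrow> bool) \<Rightarrow> nat" where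
  "UC n f = (LEAST q. \<exists>D. cl_alg n q D \<and> (\<forall>x\<in>inputs n. cl_succ D f x > 1/2))"

definition WUC :: "nat \<Rightarrow> (bool list \<Rightarrow> bool) \<Rightarrow> real" where
  "WUC n f = Inf {real q + log 2 (1 / (2 * (cl_min_succ n f D - 1/2))) | q D.
                   cl_alg n q D \<and> cl_min_succ n f D > 1/2}"

text \<open>State space: basis |i,b,z> with i<n, b<2, z<m, encoded as i*(2*m) + b*m + z;
dimension n*2*m.\<close>

definition qdim :: "nat \<Rightarrow> nat \<Rightarrow> nat" where
  "qdim n m = n * 2 * m"

definition qop_perm :: "nat \<Rightarrow> bool list \<Rightarrow> nat \<Rightarrow> nat" where
  "qop_perm m x e =
     (if x ! (e div (2 * m))
      then (if (e mod (2 * m)) div m = 0 then e + m else e - m)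
      else e)"

text \<open>Query operator O_x : |i,b,z> -> |i, b xor x_i, z>.\<close>
definition qop :: "nat \<Rightarrow> nat \<Rightarrow> bool list \<Rightarrow> complex mat" where
  "qop n m x = mat (qdim n m) (qdim n m)
     (\<lambda>(r, c). if r = qop_perm m x c then 1 else 0)"

definition is_unitary :: "nat \<Rightarrow> complex mat \<Rightarrow> bool" where
  "is_unitary d U \<longleftrightarrow> U \<in> carrier_mat d d \<and> mat_adjoint U * U = 1\<^sub>m d"

fun qrun :: "complex mat \<Rightarrow> complex mat list \<Rightarrow> complex Matrix.vec \<Rightarrow> complex Matrix.vec" where
  "qrun Ox [] v = v"
| "qrun Ox [U] v = mult_mat_vec U v"
| "qrun Ox (U # U' # Us) v = qrun Ox (U' # Us) (mult_mat_vec Ox (mult_mat_vec U v))"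

text \<open>A quantum algorithm making q queries: workspace size m >= 1, unitaries U_0..U_q,
and a final computational-basis measurement whose outcome is 1 iff the observed
basis index lies in S (since U_q is arbitrary this is a general two-outcome projective measurement).\<close>
definition q_alg :: "nat \<Rightarrow> nat \<Rightarrow> nat \<Rightarrow> complex mat list \<Rightarrow> bool" where
  "q_alg n q m Us \<longleftrightarrow> m \<ge> 1 \<and> length Us = Suc q \<and> (\<forall>U\<in>set Us. is_unitary (qdim n m) U)"

definition q_prob1 :: "nat \<Rightarrow> nat \<Rightarrow> complex mat list \<Rightarrow> nat set \<Rightarrow> bool list \<Rightarrow> real" where
  "q_prob1 n m Us S x =
     (let w = qrun (qop n m x) Us (unit_vec (qdim n m) 0)
      in \<Sum>j\<in>S \<inter> {..<qdim n m}. (cmod (vec_index w j))\<^sup>2)"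

definition q_succ :: "nat \<Rightarrow> nat \<Rightarrow> complex mat list \<Rightarrow> nat set \<Rightarrow> (bool list \<Rightarrow> bool) \<Rightarrow> bool list \<Rightarrow> real" where
  "q_succ n m Us S f x = (if f x then q_prob1 n m Us S x else 1 - q_prob1 n m Us S x)"

definition q_min_succ :: "nat \<Rightarrow> nat \<Rightarrow> complex mat list \<Rightarrow> nat set \<Rightarrow> (bool list \<Rightarrow> bool) \<Rightarrow> real" where
  "q_min_succ n m Us S f = Min ((\<lambda>x. q_succ n m Us S f x) ` inputs n)"

definition UQ :: "nat \<Rightarrow> (bool list \<Rightarrow> bool) \<Rightarrow> nat" where
  "UQ n f = (LEAST q. \<exists>m Us S. q_alg n q m Us \<and> (\<forall>x\<in>inputs n. q_succ n m Us S f x > 1/2))"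

definition WUQ :: "nat \<Rightarrow> (bool list \<Rightarrow> bool) \<Rightarrow> real" where
  "WUQ n f = Inf {real q + log 2 (1 / (2 * (q_min_succ n m Us S f - 1/2))) | q m Us S.
                   q_alg n q m Us \<and> q_min_succ n m Us S f > 1/2}"

end

theory Submission
  imports Defs
begin

text \<open>Querying one uniformly random position, padded with constant answers, computes the threshold
  function with bias 1/(2L) where L \<le> 2n, so WUC \<le> 2 + log n; without queries no algorithm tells
  the all-zero from the all-one input apart, so UC = UQ = 1. A randomized decision tree algorithm is
  simulated by a quantum algorithm with the same number of queries and the same success probabilities:
  the tree is drawn in superposition and every round permutes basis states that record the answers
  received so far; hence WUQ \<le> WUC. For the lower bound, an input at the threshold has a set I of
  at least n/2 sensitive positions. By the hybrid argument, T queries move the final state by at most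
  sqrt 8 T sqrt |I| in total over the |I| inputs obtained by flipping one of these positions, while bias
  \<beta> forces each move to be at least \<beta>. Hence \<beta> \<le> sqrt 8 T / sqrt |I|, and
  T + log (1 / (2 \<beta>)) \<ge> (log n) / 2 - 3.\<close>

definition perm_mat :: "nat \<Rightarrow> (nat \<Rightarrow> nat) \<Rightarrow> complex mat" where
  "perm_mat d f = mat d d (\<lambda>(r, c). if r = f c then 1 else 0)"

definition basis_prob :: "nat \<Rightarrow> nat set \<Rightarrow> complex Matrix.vec \<Rightarrow> real" where
  "basis_prob d S w = (\<Sum>j\<in>S \<inter> {..<d}. (cmod (w $ j))\<^sup>2)"

lemma qop_eq_perm_mat: "qop n m x = perm_mat (qdim n m) (qop_perm m x)"
  by (simp add: qop_def perm_mat_def)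

lemma perm_mat_dims [simp]: "dim_row (perm_mat d f) = d" "dim_col (perm_mat d f) = d"
  by (simp_all add: perm_mat_def)

lemma perm_mat_index: "i < d \<Longrightarrow> j < d \<Longrightarrow> perm_mat d f $$ (i, j) = (if i = f j then 1 else 0)"
  by (simp add: perm_mat_def)

lemma perm_mat_mult_vec_perm:
  assumes f: "bij_betw f {..<d} {..<d}" and v: "dim_vec v = d" and c: "c < d"
  shows "(perm_mat d f *\<^sub>v v) $ f c = v $ c"
proof -
  have fc: "f c < d" using bij_betwE[OF f] c by blast
  have inj: "f c = f c' \<longleftrightarrow> c' = c" if "c' < d" for c'
    using bij_betw_imp_inj_on[OF f] c that unfolding inj_on_def by auto
  have "(perm_mat d f *\<^sub>v v) $ f c = (\<Sum>c'\<in>{0..<d}. (if f c = f c' then 1 else 0) * v $ c')"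
    using fc v by (simp add: scalar_prod_def perm_mat_index Matrix.row_def)
  also have "\<dots> = (\<Sum>c'\<in>{0..<d}. if c' = c then v $ c' else 0)"
    by (rule sum.cong) (auto simp: inj)
  also have "\<dots> = v $ c" using c by simp
  finally show ?thesis .
qed

lemma basis_prob_perm_mat:
  assumes f: "bij_betw f {..<d} {..<d}" and v: "dim_vec v = d"
  shows "basis_prob d S (perm_mat d f *\<^sub>v v) = basis_prob d {c. f c \<in> S} v"
proof -
  have img: "f ` ({c. f c \<in> S} \<inter> {..<d}) = S \<inter> {..<d}"
    using bij_betw_imp_surj_on[OF f] by auto
  have inj: "inj_on f ({c. f c \<in> S} \<inter> {..<d})"
    using bij_betw_imp_inj_on[OF f] by (rule inj_on_subset) auto
  show ?thesis
    unfolding basis_prob_def img[symmetric] sum.reindex[OF inj]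
    by (rule sum.cong) (simp_all add: perm_mat_mult_vec_perm[OF f v])
qed

lemma mat_adjoint_dims [simp]:
  "dim_row (mat_adjoint A) = dim_col A" "dim_col (mat_adjoint A) = dim_row A"
  unfolding mat_adjoint_def by (simp_all add: mat_of_rows_def)

lemma mat_adjoint_index:
  assumes "i < dim_col A" "j < dim_row A"
  shows "mat_adjoint A $$ (i, j) = cnj (A $$ (j, i))"
  using assms unfolding mat_adjoint_def
  by (simp add: mat_of_rows_index vec_index_conjugate conjugate_complex_def)

lemma is_unitary_iff_orthonormal_cols:
  assumes "U \<in> carrier_mat d d"
  shows "is_unitary d U \<longleftrightarrow>
    (\<forall>i<d. \<forall>j<d. (\<Sum>k<d. cnj (U $$ (k, i)) * U $$ (k, j)) = (if i = j then 1 else 0))"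
proof -
  have "(mat_adjoint U * U) $$ (i, j) = (\<Sum>k<d. cnj (U $$ (k, i)) * U $$ (k, j))"
    if "i < d" "j < d" for i j
    using assms that
    by (simp add: scalar_prod_def mat_adjoint_index atLeast0LessThan)
  then show ?thesis
    using assms unfolding is_unitary_def mat_eq_iff by auto
qed

lemma perm_mat_unitary:
  assumes f: "bij_betw f {..<d} {..<d}"
  shows "is_unitary d (perm_mat d f)"
proof -
  have "(\<Sum>k<d. cnj (perm_mat d f $$ (k, i)) * perm_mat d f $$ (k, j)) = (if i = j then 1 else 0)"
    if i: "i < d" and j: "j < d" for i j
  proof -
    have fi: "f i < d" using bij_betwE[OF f] i by blast
    have fij: "f i = f j \<longleftrightarrow> i = j"
      using bij_betw_imp_inj_on[OF f] i j unfolding inj_on_def by blast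
    have "(\<Sum>k<d. cnj (perm_mat d f $$ (k, i)) * perm_mat d f $$ (k, j))
        = (\<Sum>k<d. if k = f i then (if i = j then 1 else 0) else 0)"
      by (rule sum.cong) (use i j fij in \<open>auto simp: perm_mat_index\<close>)
    also have "\<dots> = (if i = j then 1 else 0)" using fi by simp
    finally show ?thesis .
  qed
  then show ?thesis
    by (subst is_unitary_iff_orthonormal_cols) (auto simp: perm_mat_def)
qed

lemma unitary_of_real_orthonormal:
  fixes H :: "nat \<Rightarrow> nat \<Rightarrow> real"
  assumes "\<And>i j. i < d \<Longrightarrow> j < d \<Longrightarrow> (\<Sum>k<d. H k i * H k j) = (if i = j then 1 else 0)"
  shows "is_unitary d (mat d d (\<lambda>(i, j). complex_of_real (H i j)))"
proof (subst is_unitary_iff_orthonormal_cols, safe)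
  let ?U = "mat d d (\<lambda>(i, j). complex_of_real (H i j))"
  show "?U \<in> carrier_mat d d" by simp
  fix i j assume "i < d" "j < d"
  have "(\<Sum>k<d. cnj (?U $$ (k, i)) * ?U $$ (k, j)) = complex_of_real (\<Sum>k<d. H k i * H k j)"
    unfolding of_real_sum by (rule sum.cong) (use \<open>i < d\<close> \<open>j < d\<close> in auto)
  then show "(\<Sum>k<d. cnj (?U $$ (k, i)) * ?U $$ (k, j)) = (if i = j then 1 else 0)"
    using assms[OF \<open>i < d\<close> \<open>j < d\<close>] by simp
qed

lemma mult_unit_vec_0_index:
  fixes U :: "complex mat"
  assumes "U \<in> carrier_mat d d" "j < d"
  shows "(U *\<^sub>v unit_vec d 0) $ j = U $$ (j, 0)"
proof -
  have d: "0 < d" using assms(2) by linarith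
  show ?thesis using assms d
    by (subst index_mult_mat_vec) (auto simp: carrier_matD)
qed

lemma householder_orthonormal:
  fixes w :: "nat \<Rightarrow> real"
  assumes c: "c * (\<Sum>k<d. (w k)\<^sup>2) = 2" and i: "i < d" and j: "j < d"
  shows "(\<Sum>k<d. ((if k = i then 1 else 0) - c * w k * w i) * ((if k = j then 1 else 0) - c * w k * w j))
         = (if i = j then 1 else 0)"
proof -
  have e: "\<And>k. ((if k = i then 1 else 0) - c * w k * w i) * ((if k = j then 1 else 0) - c * w k * w j)
     = (if k = i then (if k = j then 1 else 0) else 0) - c * w i * (if k = j then w k else 0)
       - c * w j * (if k = i then w k else 0) + (c * c * w i * w j) * (w k)\<^sup>2"
    by (auto simp: algebra_simps power2_eq_square)
  have "(\<Sum>k<d. ((if k = i then 1 else 0) - c * w k * w i) * ((if k = j then 1 else 0) - c * w k * w j))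
      = (if i = j then 1 else 0) - 2 * c * w i * w j + (c * w i * w j) * (c * (\<Sum>k<d. (w k)\<^sup>2))"
    unfolding e sum.distrib sum_subtractf sum_distrib_left[symmetric]
    using i j by (simp add: sum.delta algebra_simps)
  then show ?thesis unfolding c by simp
qed

lemma unitary_with_first_column:
  fixes r :: "nat \<Rightarrow> real"
  assumes d: "0 < d" and r: "(\<Sum>k<d. (r k)\<^sup>2) = 1"
  obtains U where "is_unitary d U" "U *\<^sub>v unit_vec d 0 = Matrix.vec d (\<lambda>j. complex_of_real (r j))"
proof (cases "r 0 = 1")
  case True
  have "(\<Sum>k\<in>{..<d} - {0}. (r k)\<^sup>2) = 0"
    using r True d by (simp add: sum.remove)
  then have "r k = 0" if "k < d" "k \<noteq> 0" for k
    using that by (simp add: sum_nonneg_eq_0_iff)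
  then have "1\<^sub>m d *\<^sub>v unit_vec d 0 = Matrix.vec d (\<lambda>j. complex_of_real (r j))"
    using True d by (intro eq_vecI) (auto simp: mult_unit_vec_0_index)
  moreover have "is_unitary d (1\<^sub>m d)"
    unfolding is_unitary_def mat_adjoint_def by (simp add: mat_of_rows_def mat_eq_iff)
  ultimately show ?thesis using that by blast
next
  case False
  \<comment> \<open>Householder reflection in the hyperplane orthogonal to e0 - r; it swaps e0 and r\<close>
  define w where "w k = (if k = 0 then 1 else 0) - r k" for k
  define c where "c = 2 / (\<Sum>k<d. (w k)\<^sup>2)"
  define H where "H i j = (if i = j then 1 else 0) - c * w i * w j" for i j
  have "(\<Sum>k<d. (w k)\<^sup>2) = (\<Sum>k<d. (if k = 0 then 1 - 2 * r k else 0) + (r k)\<^sup>2)"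
    unfolding w_def by (rule sum.cong) (auto simp: power2_eq_square algebra_simps)
  also have "\<dots> = 2 - 2 * r 0" using d r by (simp add: sum.distrib)
  finally have norm_w: "(\<Sum>k<d. (w k)\<^sup>2) = 2 - 2 * r 0" .
  then have cN: "c * (\<Sum>k<d. (w k)\<^sup>2) = 2" using False unfolding c_def by (simp add: field_simps)
  have cw0: "c * w 0 = 1" using False norm_w unfolding c_def w_def by (simp add: field_simps)
  let ?U = "mat d d (\<lambda>(i, j). complex_of_real (H i j))"
  have "is_unitary d ?U"
    by (rule unitary_of_real_orthonormal) (simp add: H_def householder_orthonormal[OF cN])
  moreover have "H j 0 = r j" for j
  proof -
    have "H j 0 = (if j = 0 then 1 else 0) - (c * w 0) * w j" unfolding H_def by simp
    then show ?thesis unfolding cw0 by (simp add: w_def)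
  qed
  then have "?U *\<^sub>v unit_vec d 0 = Matrix.vec d (\<lambda>j. complex_of_real (r j))"
    using d by (intro eq_vecI) (auto simp: mult_unit_vec_0_index)
  ultimately show ?thesis using that by blast
qed

definition basis_idx :: "nat \<Rightarrow> nat \<Rightarrow> nat \<Rightarrow> nat \<Rightarrow> nat" where
  "basis_idx m i b z = i * (2 * m) + b * m + z"

lemma basis_idx_decode:
  assumes "b < 2" "z < m"
  shows "basis_idx m i b z div (2 * m) = i"
    and "basis_idx m i b z mod (2 * m) div m = b"
    and "basis_idx m i b z mod m = z"
proof -
  have w: "b * m + z < 2 * m" using assms by (cases b) auto
  have e: "basis_idx m i b z = (b * m + z) + i * (2 * m)" unfolding basis_idx_def by simp
  show "basis_idx m i b z div (2 * m) = i" using w by (subst e) simp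
  have "basis_idx m i b z mod (2 * m) = b * m + z" using w by (subst e) simp
  then show "basis_idx m i b z mod (2 * m) div m = b" using assms by simp
  have "basis_idx m i b z = z + (i * 2 + b) * m" unfolding basis_idx_def by (simp add: algebra_simps)
  then show "basis_idx m i b z mod m = z" using assms by simp
qed

lemma basis_idx_inject:
  assumes "b < 2" "z < m" "b' < 2" "z' < m"
  shows "basis_idx m i b z = basis_idx m i' b' z' \<longleftrightarrow> i = i' \<and> b = b' \<and> z = z'"
  using basis_idx_decode[OF assms(1,2), of i] basis_idx_decode[OF assms(3,4), of i'] by metis

lemma basis_idx_less:
  assumes "i < n" "b < 2" "z < m"
  shows "basis_idx m i b z < n * (2 * m)"
proof -
  have "b * m + z < 2 * m" using assms by (cases b) auto
  then have "basis_idx m i b z < (i + 1) * (2 * m)" unfolding basis_idx_def by simp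
  also have "\<dots> \<le> n * (2 * m)" using assms by (intro mult_right_mono) auto
  finally show ?thesis .
qed

lemma basis_idx_cases:
  assumes "0 < m" "e < n * (2 * m)"
  obtains i b z where "e = basis_idx m i b z" "i < n" "b < 2" "z < m"
proof
  show "e div (2 * m) < n" using assms(2) by (rule less_mult_imp_div_less)
  show "e mod (2 * m) div m < 2" using assms(1) by (simp add: div_less_iff_less_mult mult.commute)
  show "e mod m < m" using assms(1) by simp
  have "e mod (2 * m) = e mod (2 * m) div m * m + e mod m"
    by (metis div_mult_mod_eq mod_mod_cancel dvd_triv_right)
  then show "e = basis_idx m (e div (2 * m)) (e mod (2 * m) div m) (e mod m)"
    unfolding basis_idx_def by (metis add.assoc div_mult_mod_eq)
qed

lemma sum_basis_idx:
  assumes m: "0 < m"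
  shows "(\<Sum>e<n * (2 * m). F e) = (\<Sum>i<n. \<Sum>z<m. F (basis_idx m i 0 z) + F (basis_idx m i 1 z))"
proof -
  let ?g = "\<lambda>(i, b, z). basis_idx m i b z"
  let ?A = "{..<n} \<times> {..<2::nat} \<times> {..<m}"
  have inj: "inj_on ?g ?A"
  proof (rule inj_onI)
    fix p p' assume "p \<in> ?A" "p' \<in> ?A" "?g p = ?g p'"
    then show "p = p'" using basis_idx_inject by clarsimp
  qed
  have img: "?g ` ?A = {..<n * (2 * m)}"
  proof
    show "?g ` ?A \<subseteq> {..<n * (2 * m)}" by (auto intro: basis_idx_less)
    show "{..<n * (2 * m)} \<subseteq> ?g ` ?A"
    proof
      fix e assume "e \<in> {..<n * (2 * m)}"
      with m obtain i b z where "e = basis_idx m i b z" "i < n" "b < 2" "z < m"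
        by (auto elim: basis_idx_cases)
      then show "e \<in> ?g ` ?A" by (auto intro!: image_eqI[where x = "(i, b, z)"])
    qed
  qed
  have "(\<Sum>e<n * (2 * m). F e) = (\<Sum>(i, b, z)\<in>?A. F (basis_idx m i b z))"
    by (rule sum.reindex_cong[OF inj img[symmetric]]) auto
  also have "\<dots> = (\<Sum>i<n. \<Sum>b<2. \<Sum>z<m. F (basis_idx m i b z))"
    by (simp add: sum.cartesian_product)
  also have "\<dots> = (\<Sum>i<n. \<Sum>z<m. F (basis_idx m i 0 z) + F (basis_idx m i 1 z))"
    by (simp add: numeral_2_eq_2 sum.distrib)
  finally show ?thesis .
qed

lemma qop_perm_basis_idx:
  assumes "b < 2" "z < m"
  shows "qop_perm m x (basis_idx m i b z) = basis_idx m i (if x ! i then 1 - b else b) z"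
proof -
  have "b = 0 \<or> b = 1" using assms by auto
  then show ?thesis
    using assms unfolding qop_perm_def
    by (auto simp: basis_idx_decode, auto simp: basis_idx_def)
qed

lemma qop_perm_involution:
  assumes "0 < m" "e < n * (2 * m)"
  shows "qop_perm m x e < n * (2 * m)" and "qop_perm m x (qop_perm m x e) = e"
proof -
  obtain i b z where e: "e = basis_idx m i b z" "i < n" "b < 2" "z < m"
    using assms by (rule basis_idx_cases)
  then show "qop_perm m x e < n * (2 * m)"
    by (simp add: qop_perm_basis_idx basis_idx_less)
  show "qop_perm m x (qop_perm m x e) = e"
    using e by (auto simp: qop_perm_basis_idx)
qed

lemma bij_betw_qop_perm:
  assumes "0 < m"
  shows "bij_betw (qop_perm m x) {..<n * (2 * m)} {..<n * (2 * m)}"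
  by (rule bij_betw_byWitness[where f' = "qop_perm m x"])
     (use qop_perm_involution[OF assms] in auto)

lemma qdim_eq: "qdim n m = n * (2 * m)"
  by (simp add: qdim_def)

lemma qop_unitary: "0 < m \<Longrightarrow> is_unitary (qdim n m) (qop n m x)"
  unfolding qop_eq_perm_mat qdim_eq by (intro perm_mat_unitary bij_betw_qop_perm)

lemma qop_mult_vec_index:
  assumes m: "0 < m" and e: "e < n * (2 * m)" and w: "dim_vec w = n * (2 * m)"
  shows "(qop n m x *\<^sub>v w) $ e = w $ qop_perm m x e"
proof -
  have "(qop n m x *\<^sub>v w) $ qop_perm m x (qop_perm m x e) = w $ qop_perm m x e"
    unfolding qop_eq_perm_mat qdim_eq
    by (rule perm_mat_mult_vec_perm[OF bij_betw_qop_perm[OF m] w qop_perm_involution(1)[OF m e]])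
  then show ?thesis using qop_perm_involution(2)[OF m e] by simp
qed

fun qsteps :: "complex mat \<Rightarrow> complex mat list \<Rightarrow> complex Matrix.vec \<Rightarrow> complex Matrix.vec" where
  "qsteps Ox [] w = w"
| "qsteps Ox (U # Us) w = qsteps Ox Us (U *\<^sub>v (Ox *\<^sub>v w))"

lemma qrun_Cons: "qrun Ox (U # Us) v = qsteps Ox Us (U *\<^sub>v v)"
  by (induction Us arbitrary: U v) auto

fun perm_steps :: "(nat \<Rightarrow> nat) \<Rightarrow> (nat \<Rightarrow> nat) list \<Rightarrow> nat \<Rightarrow> nat" where
  "perm_steps p [] e = e"
| "perm_steps p (f # fs) e = perm_steps p fs (f (p e))"

lemma basis_prob_qsteps_perm:
  assumes "bij_betw p {..<d} {..<d}" "\<forall>f\<in>set fs. bij_betw f {..<d} {..<d}" "dim_vec w = d"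
  shows "basis_prob d S (qsteps (perm_mat d p) (map (perm_mat d) fs) w)
       = basis_prob d {c. perm_steps p fs c \<in> S} w"
  using assms
proof (induction fs arbitrary: w S)
  case (Cons f fs)
  have "basis_prob d S (qsteps (perm_mat d p) (map (perm_mat d) (f # fs)) w)
      = basis_prob d {c. perm_steps p fs c \<in> S} (perm_mat d f *\<^sub>v (perm_mat d p *\<^sub>v w))"
    using Cons by simp
  also have "\<dots> = basis_prob d {c. perm_steps p (f # fs) c \<in> S} w"
    using Cons.prems by (simp add: basis_prob_perm_mat)
  finally show ?case .
qed simp

definition l2norm :: "nat \<Rightarrow> complex Matrix.vec \<Rightarrow> real" where
  "l2norm d v = L2_set (\<lambda>j. cmod (v $ j)) {..<d}"

definition l2dist :: "nat \<Rightarrow> complex Matrix.vec \<Rightarrow> complex Matrix.vec \<Rightarrow> real" where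
  "l2dist d a b = L2_set (\<lambda>j. cmod (a $ j - b $ j)) {..<d}"

lemma l2norm_nonneg: "0 \<le> l2norm d v"
  unfolding l2norm_def by (rule L2_set_nonneg)

lemma l2norm_sq: "(l2norm d v)\<^sup>2 = (\<Sum>j<d. (cmod (v $ j))\<^sup>2)"
  unfolding l2norm_def L2_set_def by (simp add: sum_nonneg)

lemma l2dist_sq: "(l2dist d a b)\<^sup>2 = (\<Sum>j<d. (cmod (a $ j - b $ j))\<^sup>2)"
  unfolding l2dist_def L2_set_def by (simp add: sum_nonneg)

lemma l2dist_self [simp]: "l2dist d a a = 0"
  unfolding l2dist_def by (simp add: L2_set_def)

lemma l2dist_triangle: "l2dist d a c \<le> l2dist d a b + l2dist d b c"
proof -
  have "cmod (a $ j - c $ j) \<le> cmod (a $ j - b $ j) + cmod (b $ j - c $ j)" for j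
    using norm_triangle_ineq[of "a $ j - b $ j" "b $ j - c $ j"] by simp
  then show ?thesis
    unfolding l2dist_def by (rule order_trans[OF L2_set_mono L2_set_triangle_ineq]) auto
qed

lemma unitary_mult_vec_dim: "is_unitary d U \<Longrightarrow> dim_vec (U *\<^sub>v v) = d"
  unfolding is_unitary_def by auto

lemma unitary_mult_vec_index:
  "is_unitary d U \<Longrightarrow> dim_vec v = d \<Longrightarrow> j < d \<Longrightarrow> (U *\<^sub>v v) $ j = (\<Sum>k<d. U $$ (j, k) * v $ k)"
  unfolding is_unitary_def by (auto simp: scalar_prod_def atLeast0LessThan)

lemma unitary_sum_sq:
  assumes U: "is_unitary d U" and v: "dim_vec v = d"
  shows "(\<Sum>j<d. (cmod ((U *\<^sub>v v) $ j))\<^sup>2) = (\<Sum>j<d. (cmod (v $ j))\<^sup>2)"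
proof -
  have orth: "(\<Sum>j<d. cnj (U $$ (j, l)) * U $$ (j, k)) = (if l = k then 1 else 0)"
    if "k < d" "l < d" for k l
    using U that is_unitary_iff_orthonormal_cols[of U d] unfolding is_unitary_def by blast
  have "complex_of_real (\<Sum>j<d. (cmod ((U *\<^sub>v v) $ j))\<^sup>2)
      = (\<Sum>j<d. \<Sum>k<d. \<Sum>l<d. (v $ k * cnj (v $ l)) * (cnj (U $$ (j, l)) * U $$ (j, k)))"
    unfolding of_real_sum complex_norm_square
    by (intro sum.cong refl)
       (simp add: unitary_mult_vec_index[OF U v] cnj_sum sum_product algebra_simps)
  also have "\<dots> = (\<Sum>k<d. \<Sum>l<d. \<Sum>j<d. (v $ k * cnj (v $ l)) * (cnj (U $$ (j, l)) * U $$ (j, k)))"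
    by (subst sum.swap) (rule sum.cong[OF refl], rule sum.swap)
  also have "\<dots> = (\<Sum>k<d. \<Sum>l<d. (v $ k * cnj (v $ l)) * (if l = k then 1 else 0))"
    by (intro sum.cong refl) (simp add: sum_distrib_left[symmetric] orth)
  also have "\<dots> = (\<Sum>k<d. v $ k * cnj (v $ k))"
    by (simp add: if_distrib cong: if_cong)
  also have "\<dots> = complex_of_real (\<Sum>j<d. (cmod (v $ j))\<^sup>2)"
    by (simp only: of_real_sum complex_norm_square)
  finally show ?thesis by (simp only: of_real_eq_iff)
qed

lemma l2norm_unitary: "is_unitary d U \<Longrightarrow> dim_vec v = d \<Longrightarrow> l2norm d (U *\<^sub>v v) = l2norm d v"
  unfolding l2norm_def L2_set_def by (simp add: unitary_sum_sq)

lemma l2dist_unitary: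
  assumes U: "is_unitary d U" and a: "dim_vec a = d" and b: "dim_vec b = d"
  shows "l2dist d (U *\<^sub>v a) (U *\<^sub>v b) = l2dist d a b"
proof -
  let ?c = "Matrix.vec d (\<lambda>j. a $ j - b $ j)"
  have c: "dim_vec ?c = d" by simp
  have "(U *\<^sub>v a) $ j - (U *\<^sub>v b) $ j = (U *\<^sub>v ?c) $ j" if "j < d" for j
    using that
    by (simp add: unitary_mult_vec_index[OF U a] unitary_mult_vec_index[OF U b]
        unitary_mult_vec_index[OF U c] sum_subtractf algebra_simps)
  then have "l2dist d (U *\<^sub>v a) (U *\<^sub>v b) = l2norm d (U *\<^sub>v ?c)"
    unfolding l2dist_def l2norm_def by (intro L2_set_cong) auto
  also have "\<dots> = l2norm d ?c" by (rule l2norm_unitary[OF U c])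
  also have "\<dots> = l2dist d a b"
    unfolding l2dist_def l2norm_def by (intro L2_set_cong) auto
  finally show ?thesis .
qed

lemma l2norm_unit_vec: "0 < d \<Longrightarrow> l2norm d (unit_vec d 0) = 1"
  unfolding l2norm_def L2_set_def
  by (simp add: unit_vec_def if_distrib[of "\<lambda>x. (cmod x)\<^sup>2"] cong: if_cong)

lemma basis_prob_le_l2norm_sq: "basis_prob d S v \<le> (l2norm d v)\<^sup>2"
  unfolding basis_prob_def l2norm_sq by (rule sum_mono2) auto

lemma qsteps_dim:
  assumes Ox: "is_unitary d Ox"
  shows "\<forall>U\<in>set Us. is_unitary d U \<Longrightarrow> dim_vec w = d \<Longrightarrow> dim_vec (qsteps Ox Us w) = d"
proof (induction Us arbitrary: w)
  case (Cons U Us)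
  then show ?case using unitary_mult_vec_dim[of d U] by simp
qed simp

lemma l2norm_qsteps:
  assumes Ox: "is_unitary d Ox"
  shows "\<forall>U\<in>set Us. is_unitary d U \<Longrightarrow> dim_vec w = d \<Longrightarrow> l2norm d (qsteps Ox Us w) = l2norm d w"
proof (induction Us arbitrary: w)
  case (Cons U Us)
  then have U: "is_unitary d U" by simp
  have w': "dim_vec (Ox *\<^sub>v w) = d" by (rule unitary_mult_vec_dim[OF Ox])
  then show ?case
    using Cons unitary_mult_vec_dim[OF U]
    by (simp add: l2norm_unitary[OF U w'] l2norm_unitary[OF Ox])
qed simp

lemma l2dist_qsteps:
  assumes Ox: "is_unitary d Ox"
  shows "\<forall>U\<in>set Us. is_unitary d U \<Longrightarrow> dim_vec a = d \<Longrightarrow> dim_vec b = d \<Longrightarrow>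
    l2dist d (qsteps Ox Us a) (qsteps Ox Us b) = l2dist d a b"
proof (induction Us arbitrary: a b)
  case (Cons U Us)
  then have U: "is_unitary d U" by simp
  have a': "dim_vec (Ox *\<^sub>v a) = d" and b': "dim_vec (Ox *\<^sub>v b) = d"
    by (rule unitary_mult_vec_dim[OF Ox])+
  then show ?case
    using Cons unitary_mult_vec_dim[OF U]
    by (simp add: l2dist_unitary[OF U a' b'] l2dist_unitary[OF Ox])
qed simp

lemma q_prob1_qsteps:
  "q_prob1 n m (U # Us) S x = basis_prob (qdim n m) S (qsteps (qop n m x) Us (U *\<^sub>v unit_vec (qdim n m) 0))"
  by (simp add: q_prob1_def basis_prob_def qrun_Cons)

lemma q_prob1_bounds:
  assumes "q_alg n q m Us" "0 < n"
  shows "0 \<le> q_prob1 n m Us S x" "q_prob1 n m Us S x \<le> 1"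
proof -
  show "0 \<le> q_prob1 n m Us S x" unfolding q_prob1_def Let_def by (simp add: sum_nonneg)
  obtain U Us' where Us: "Us = U # Us'" using assms(1) unfolding q_alg_def by (cases Us) auto
  let ?d = "qdim n m"
  have d: "0 < ?d" using assms unfolding q_alg_def qdim_def by simp
  have U: "is_unitary ?d U" and Us': "\<forall>U\<in>set Us'. is_unitary ?d U"
    using assms(1) unfolding q_alg_def Us by auto
  have Ox: "is_unitary ?d (qop n m x)" using assms(1) unfolding q_alg_def by (simp add: qop_unitary)
  have u: "dim_vec (U *\<^sub>v unit_vec ?d 0) = ?d" by (rule unitary_mult_vec_dim[OF U])
  have "l2norm ?d (qsteps (qop n m x) Us' (U *\<^sub>v unit_vec ?d 0)) = 1"
    using l2norm_qsteps[OF Ox Us' u] l2norm_unitary[OF U] l2norm_unit_vec[OF d] by simp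
  then show "q_prob1 n m Us S x \<le> 1"
    unfolding Us q_prob1_qsteps by (metis basis_prob_le_l2norm_sq power_one)
qed

section \<open>The hybrid argument\<close>

fun hybrid_sum :: "nat \<Rightarrow> complex mat \<Rightarrow> complex mat \<Rightarrow> complex mat list \<Rightarrow> complex Matrix.vec \<Rightarrow> real" where
  "hybrid_sum d O1 O2 [] w = 0"
| "hybrid_sum d O1 O2 (U # Us) w = l2dist d (O1 *\<^sub>v w) (O2 *\<^sub>v w) + hybrid_sum d O1 O2 Us (U *\<^sub>v (O1 *\<^sub>v w))"

lemma l2dist_qsteps_le_hybrid_sum:
  assumes O1: "is_unitary d O1" and O2: "is_unitary d O2"
  shows "\<forall>U\<in>set Us. is_unitary d U \<Longrightarrow> dim_vec w = d \<Longrightarrow>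
    l2dist d (qsteps O1 Us w) (qsteps O2 Us w) \<le> hybrid_sum d O1 O2 Us w"
proof (induction Us arbitrary: w)
  case (Cons U Us)
  have U: "is_unitary d U" and Us: "\<forall>U\<in>set Us. is_unitary d U" using Cons.prems by auto
  let ?a = "U *\<^sub>v (O1 *\<^sub>v w)" and ?b = "U *\<^sub>v (O2 *\<^sub>v w)"
  have a: "dim_vec ?a = d" and b: "dim_vec ?b = d" by (rule unitary_mult_vec_dim[OF U])+
  have "l2dist d (qsteps O1 (U # Us) w) (qsteps O2 (U # Us) w) = l2dist d (qsteps O1 Us ?a) (qsteps O2 Us ?b)"
    by simp
  also have "\<dots> \<le> l2dist d (qsteps O1 Us ?a) (qsteps O2 Us ?a) + l2dist d (qsteps O2 Us ?a) (qsteps O2 Us ?b)"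
    by (rule l2dist_triangle)
  also have "l2dist d (qsteps O2 Us ?a) (qsteps O2 Us ?b) = l2dist d (O1 *\<^sub>v w) (O2 *\<^sub>v w)"
    using l2dist_qsteps[OF O2 Us a b] l2dist_unitary[OF U] unitary_mult_vec_dim[OF O1] unitary_mult_vec_dim[OF O2]
    by simp
  also have "l2dist d (qsteps O1 Us ?a) (qsteps O2 Us ?a) \<le> hybrid_sum d O1 O2 Us ?a"
    by (rule Cons.IH[OF Us a])
  finally show ?case by simp
qed simp

definition query_mass :: "nat \<Rightarrow> complex Matrix.vec \<Rightarrow> nat \<Rightarrow> real" where
  "query_mass m w i = (\<Sum>z<m. (cmod (w $ basis_idx m i 0 z))\<^sup>2 + (cmod (w $ basis_idx m i 1 z))\<^sup>2)"

lemma query_mass_nonneg: "0 \<le> query_mass m w i"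
  unfolding query_mass_def by (intro sum_nonneg) simp

lemma sum_query_mass: "0 < m \<Longrightarrow> (\<Sum>i<n. query_mass m w i) = (l2norm (n * (2 * m)) w)\<^sup>2"
  unfolding l2norm_sq query_mass_def by (rule sum_basis_idx[symmetric])

lemma cmod_diff_sq_le: "(cmod (a - b))\<^sup>2 \<le> 2 * (cmod a)\<^sup>2 + 2 * (cmod b)\<^sup>2"
proof -
  have "(cmod (a - b))\<^sup>2 \<le> (cmod a + cmod b)\<^sup>2"
    by (intro power_mono norm_triangle_ineq4) simp
  also have "\<dots> \<le> 2 * (cmod a)\<^sup>2 + 2 * (cmod b)\<^sup>2"
    using sum_squares_bound[of "cmod a" "cmod b"] by (simp add: power2_eq_square algebra_simps)
  finally show ?thesis .
qed

lemma l2dist_qop_le_query_mass: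
  assumes m: "0 < m" and i: "i < n" and w: "dim_vec w = n * (2 * m)"
    and xy: "\<And>j. j < n \<Longrightarrow> j \<noteq> i \<Longrightarrow> x ! j = y ! j"
  shows "l2dist (n * (2 * m)) (qop n m x *\<^sub>v w) (qop n m y *\<^sub>v w) \<le> sqrt 8 * sqrt (query_mass m w i)"
proof -
  let ?d = "n * (2 * m)"
  let ?F = "\<lambda>e. (cmod (w $ qop_perm m x e - w $ qop_perm m y e))\<^sup>2"
  let ?s = "\<lambda>z. (cmod (w $ basis_idx m i 0 z))\<^sup>2 + (cmod (w $ basis_idx m i 1 z))\<^sup>2"
  have other_blocks: "?F (basis_idx m i' b z) = 0" if "i' \<noteq> i" "i' < n" "b < 2" "z < m" for i' b z
    using that xy by (simp add: qop_perm_basis_idx)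
  have entry: "(cmod (w $ basis_idx m i b z))\<^sup>2 \<le> ?s z" if "b < 2" for b z
    using that by (cases b) auto
  have pair: "(cmod (w $ basis_idx m i b1 z - w $ basis_idx m i b2 z))\<^sup>2 \<le> 4 * ?s z"
    if "b1 < 2" "b2 < 2" for b1 b2 z
  proof -
    have "(t::real) \<le> 2 * a + 2 * b \<Longrightarrow> a \<le> s \<Longrightarrow> b \<le> s \<Longrightarrow> t \<le> 4 * s" for t a b s
      by linarith
    then show ?thesis using cmod_diff_sq_le entry[OF that(1)] entry[OF that(2)] by blast
  qed
  have own_block: "?F (basis_idx m i b z) \<le> 4 * ?s z" if "b < 2" "z < m" for b z
  proof -
    let ?b1 = "if x ! i then 1 - b else b" and ?b2 = "if y ! i then 1 - b else b"
    have "?F (basis_idx m i b z) = (cmod (w $ basis_idx m i ?b1 z - w $ basis_idx m i ?b2 z))\<^sup>2"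
      using that by (simp add: qop_perm_basis_idx)
    also have "\<dots> \<le> 4 * ?s z" by (rule pair) (use that in auto)
    finally show ?thesis .
  qed
  have "(l2dist ?d (qop n m x *\<^sub>v w) (qop n m y *\<^sub>v w))\<^sup>2 = (\<Sum>e<?d. ?F e)"
    unfolding l2dist_sq by (rule sum.cong) (simp_all add: qop_mult_vec_index[OF m _ w])
  also have "\<dots> = (\<Sum>i'<n. \<Sum>z<m. ?F (basis_idx m i' 0 z) + ?F (basis_idx m i' 1 z))"
    by (rule sum_basis_idx[OF m])
  also have "\<dots> = (\<Sum>z<m. ?F (basis_idx m i 0 z) + ?F (basis_idx m i 1 z))"
    using i other_blocks by (subst sum.remove[of _ i]) (auto intro!: sum.neutral)
  also have "\<dots> \<le> (\<Sum>z<m. 8 * ?s z)"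
    using own_block[of 0] own_block[of 1] by (intro sum_mono) fastforce
  also have "\<dots> = 8 * query_mass m w i" unfolding query_mass_def by (simp add: sum_distrib_left)
  finally have "(l2dist ?d (qop n m x *\<^sub>v w) (qop n m y *\<^sub>v w))\<^sup>2 \<le> 8 * query_mass m w i" .
  then show ?thesis by (simp add: real_le_rsqrt flip: real_sqrt_mult)
qed

lemma sum_sqrt_le_sqrt_card_mult:
  assumes "finite I" "\<And>i. i \<in> I \<Longrightarrow> 0 \<le> a i"
  shows "(\<Sum>i\<in>I. sqrt (a i)) \<le> sqrt (real (card I)) * sqrt (\<Sum>i\<in>I. a i)"
proof -
  have "(\<Sum>i\<in>I. sqrt (a i))\<^sup>2 \<le> (\<Sum>i\<in>I. (sqrt (a i))\<^sup>2) * real (card I)"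
    by (rule sum_squared_le_sum_of_squares)
  also have "(\<Sum>i\<in>I. (sqrt (a i))\<^sup>2) = (\<Sum>i\<in>I. a i)" using assms(2) by (intro sum.cong) auto
  finally show ?thesis by (simp add: real_le_rsqrt mult.commute flip: real_sqrt_mult)
qed

text \<open>The core of the hybrid argument: an oracle differing from O_x only in position i can only be
  noticed through the query mass on i, and in each round the query masses add up to the squared norm.\<close>

lemma sum_hybrid_sum_le:
  assumes m: "0 < m" and I: "I \<subseteq> {..<n}"
    and xy: "\<And>i j. i \<in> I \<Longrightarrow> j < n \<Longrightarrow> j \<noteq> i \<Longrightarrow> x ! j = y i ! j"
  shows "\<forall>U\<in>set Us. is_unitary (n * (2 * m)) U \<Longrightarrow> dim_vec w = n * (2 * m) \<Longrightarrow>
    (\<Sum>i\<in>I. hybrid_sum (n * (2 * m)) (qop n m x) (qop n m (y i)) Us w)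
     \<le> sqrt 8 * real (length Us) * sqrt (real (card I)) * l2norm (n * (2 * m)) w"
proof (induction Us arbitrary: w)
  case (Cons U Us)
  let ?d = "n * (2 * m)"
  have U: "is_unitary ?d U" and Us: "\<forall>U\<in>set Us. is_unitary ?d U" using Cons.prems by auto
  have Ox: "is_unitary ?d (qop n m x)" using qop_unitary[OF m] by (simp add: qdim_eq)
  have w: "dim_vec w = ?d" by (rule Cons.prems(2))
  let ?w' = "U *\<^sub>v (qop n m x *\<^sub>v w)"
  have w': "dim_vec ?w' = ?d" by (rule unitary_mult_vec_dim[OF U])
  have norm_w': "l2norm ?d ?w' = l2norm ?d w"
    using l2norm_unitary[OF U unitary_mult_vec_dim[OF Ox]] l2norm_unitary[OF Ox w] by simp
  have "(\<Sum>i\<in>I. l2dist ?d (qop n m x *\<^sub>v w) (qop n m (y i) *\<^sub>v w)) \<le> (\<Sum>i\<in>I. sqrt 8 * sqrt (query_mass m w i))"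
    using I xy by (intro sum_mono l2dist_qop_le_query_mass[OF m _ w]) auto
  also have "\<dots> \<le> sqrt 8 * (sqrt (real (card I)) * sqrt (\<Sum>i\<in>I. query_mass m w i))"
    using I finite_subset
    by (auto simp flip: sum_distrib_left intro!: mult_left_mono sum_sqrt_le_sqrt_card_mult query_mass_nonneg)
  also have "sqrt (\<Sum>i\<in>I. query_mass m w i) \<le> sqrt (\<Sum>i<n. query_mass m w i)"
    using I by (intro real_sqrt_le_mono sum_mono2) (auto simp: query_mass_nonneg)
  also have "\<dots> = l2norm ?d w" by (simp add: sum_query_mass[OF m] l2norm_nonneg)
  finally have first: "(\<Sum>i\<in>I. l2dist ?d (qop n m x *\<^sub>v w) (qop n m (y i) *\<^sub>v w))
      \<le> sqrt 8 * sqrt (real (card I)) * l2norm ?d w"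
    by (simp add: mult.assoc mult_left_mono)
  have rest: "(\<Sum>i\<in>I. hybrid_sum ?d (qop n m x) (qop n m (y i)) Us ?w')
      \<le> sqrt 8 * real (length Us) * sqrt (real (card I)) * l2norm ?d w"
    using Cons.IH[OF Us w'] norm_w' by simp
  show ?case using first rest by (simp add: sum.distrib algebra_simps)
qed simp

lemma abs_basis_prob_diff_le:
  "\<bar>basis_prob d S a - basis_prob d S b\<bar> \<le> l2dist d a b * (l2norm d a + l2norm d b)"
proof -
  let ?A = "\<lambda>j. cmod (a $ j)" and ?B = "\<lambda>j. cmod (b $ j)"
  have "\<bar>basis_prob d S a - basis_prob d S b\<bar> \<le> (\<Sum>j\<in>S \<inter> {..<d}. \<bar>(?A j)\<^sup>2 - (?B j)\<^sup>2\<bar>)"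
    unfolding basis_prob_def sum_subtractf[symmetric] by (rule sum_abs)
  also have "\<dots> \<le> (\<Sum>j<d. \<bar>(?A j)\<^sup>2 - (?B j)\<^sup>2\<bar>)" by (rule sum_mono2) auto
  also have "\<dots> \<le> (\<Sum>j<d. cmod (a $ j - b $ j) * (?A j + ?B j))"
  proof (rule sum_mono)
    fix j
    have "(?A j)\<^sup>2 - (?B j)\<^sup>2 = (?A j - ?B j) * (?A j + ?B j)"
      by (simp add: power2_eq_square algebra_simps)
    then have "\<bar>(?A j)\<^sup>2 - (?B j)\<^sup>2\<bar> = \<bar>?A j - ?B j\<bar> * (?A j + ?B j)"
      by (simp add: abs_mult)
    also have "\<dots> \<le> cmod (a $ j - b $ j) * (?A j + ?B j)"
      by (intro mult_right_mono norm_triangle_ineq3) simp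
    finally show "\<bar>(?A j)\<^sup>2 - (?B j)\<^sup>2\<bar> \<le> cmod (a $ j - b $ j) * (?A j + ?B j)" .
  qed
  also have "\<dots> \<le> l2dist d a b * L2_set (\<lambda>j. ?A j + ?B j) {..<d}"
    unfolding l2dist_def by (rule order_trans[OF sum_mono L2_set_mult_ineq]) simp
  also have "\<dots> \<le> l2dist d a b * (l2norm d a + l2norm d b)"
    unfolding l2norm_def
    by (intro mult_left_mono L2_set_triangle_ineq) (simp add: l2dist_def L2_set_nonneg)
  finally show ?thesis .
qed

section \<open>The lower bound from sensitivity\<close>

lemma finite_inputs: "finite (inputs n)"
proof -
  have "inputs n = {xs. set xs \<subseteq> UNIV \<and> length xs = n}" unfolding inputs_def by auto
  then show ?thesis using finite_lists_length_eq[of "UNIV :: bool set" n] by simp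
qed

lemma replicate_in_inputs: "replicate n b \<in> inputs n"
  by (simp add: inputs_def)

definition flip :: "nat \<Rightarrow> bool list \<Rightarrow> bool list" where
  "flip i z = z[i := \<not> z ! i]"

lemma flip_in_inputs: "z \<in> inputs n \<Longrightarrow> flip i z \<in> inputs n"
  by (simp add: inputs_def flip_def)

lemma bias_mult_card_le:
  assumes alg: "q_alg n T m Us"
    and succ: "\<forall>x\<in>inputs n. 1/2 + \<beta> \<le> q_succ n m Us S f x"
    and z: "z \<in> inputs n" and I: "I \<subseteq> {..<n}" and sens: "\<forall>i\<in>I. f (flip i z) \<noteq> f z"
  shows "\<beta> * real (card I) \<le> sqrt 8 * real T * sqrt (real (card I))"
proof (cases "I = {}")
  case False
  then have n: "0 < n" using I by auto
  let ?d = "n * (2 * m)"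
  have m: "0 < m" using alg unfolding q_alg_def by simp
  obtain U0 Us' where Us: "Us = U0 # Us'" using alg unfolding q_alg_def by (cases Us) auto
  have U0: "is_unitary ?d U0" and Us': "\<forall>U\<in>set Us'. is_unitary ?d U" and T: "length Us' = T"
    using alg unfolding q_alg_def Us qdim_eq by auto
  let ?u = "U0 *\<^sub>v unit_vec ?d 0"
  have u: "dim_vec ?u = ?d" by (rule unitary_mult_vec_dim[OF U0])
  have norm_u: "l2norm ?d ?u = 1" using l2norm_unitary[OF U0] l2norm_unit_vec n m by simp
  have Ox: "is_unitary ?d (qop n m x)" for x using qop_unitary[OF m] by (simp add: qdim_eq)
  define \<psi> where "\<psi> x = qsteps (qop n m x) Us' ?u" for x
  have \<psi>: "dim_vec (\<psi> x) = ?d" "l2norm ?d (\<psi> x) = 1" for x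
    unfolding \<psi>_def using qsteps_dim[OF Ox Us' u] l2norm_qsteps[OF Ox Us' u] norm_u by simp_all
  have prob: "q_prob1 n m Us S x = basis_prob ?d S (\<psi> x)" for x
    unfolding Us q_prob1_qsteps \<psi>_def qdim_eq ..
  have each: "\<beta> \<le> hybrid_sum ?d (qop n m z) (qop n m (flip i z)) Us' ?u" if i: "i \<in> I" for i
  proof -
    let ?y = "flip i z"
    have "1/2 + \<beta> \<le> q_succ n m Us S f z" "1/2 + \<beta> \<le> q_succ n m Us S f ?y"
      using succ z flip_in_inputs[OF z] by auto
    then have "2 * \<beta> \<le> \<bar>q_prob1 n m Us S z - q_prob1 n m Us S ?y\<bar>"
      using sens i unfolding q_succ_def by (cases "f z") auto
    also have "\<dots> \<le> l2dist ?d (\<psi> z) (\<psi> ?y) * (l2norm ?d (\<psi> z) + l2norm ?d (\<psi> ?y))"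
      unfolding prob by (rule abs_basis_prob_diff_le)
    also have "\<dots> = 2 * l2dist ?d (\<psi> z) (\<psi> ?y)" using \<psi> by simp
    also have "l2dist ?d (\<psi> z) (\<psi> ?y) \<le> hybrid_sum ?d (qop n m z) (qop n m ?y) Us' ?u"
      unfolding \<psi>_def by (rule l2dist_qsteps_le_hybrid_sum[OF Ox Ox Us' u])
    finally show ?thesis by simp
  qed
  have "\<beta> * real (card I) = (\<Sum>i\<in>I. \<beta>)" by simp
  also have "\<dots> \<le> (\<Sum>i\<in>I. hybrid_sum ?d (qop n m z) (qop n m (flip i z)) Us' ?u)"
    by (rule sum_mono) (rule each)
  also have "\<dots> \<le> sqrt 8 * real (length Us') * sqrt (real (card I)) * l2norm ?d ?u"
    by (rule sum_hybrid_sum_le[OF m I _ Us' u]) (simp add: flip_def)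
  finally show ?thesis using norm_u T by simp
qed simp

lemma log2_le_self: "1 \<le> T \<Longrightarrow> log 2 (real T) \<le> real T"
proof -
  assume T: "1 \<le> T"
  have "log 2 (real T) < log 2 (2 ^ T)" using T by (intro log_less) (auto simp: of_nat_less_two_power)
  then show ?thesis by (simp add: log_pow_cancel)
qed

lemma log_inverse_bias_ge:
  fixes \<beta> c :: real
  assumes \<beta>: "0 < \<beta>" and c: "1 \<le> c" and bound: "\<beta> * sqrt c \<le> sqrt 8 * real T"
  shows "log 2 c / 2 - 5/2 \<le> real T + log 2 (1 / (2 * \<beta>))"
proof -
  have T: "1 \<le> T"
  proof (rule ccontr)
    assume "\<not> 1 \<le> T"
    then have "T = 0" by simp
    then have "\<beta> * sqrt c \<le> 0" using bound by simp
    moreover have "0 < \<beta> * sqrt c" using \<beta> c by simp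
    ultimately show False by simp
  qed
  have "(\<beta> * sqrt c)\<^sup>2 \<le> (sqrt 8 * real T)\<^sup>2"
    using bound \<beta> c by (intro power_mono) auto
  then have "c / (32 * (real T)\<^sup>2) \<le> (1 / (2 * \<beta>))\<^sup>2"
    using \<beta> c T by (simp add: field_simps power_mult_distrib)
  then have "log 2 (c / (32 * (real T)\<^sup>2)) \<le> log 2 ((1 / (2 * \<beta>))\<^sup>2)"
    using \<beta> c T by (subst log_le_cancel_iff) auto
  moreover have "log 2 (c / (32 * (real T)\<^sup>2)) = log 2 c - 5 - 2 * log 2 (real T)"
    using c T log_pow_cancel[of 2 5] by (simp add: log_divide log_mult log_nat_power)
  moreover have "log 2 ((1 / (2 * \<beta>))\<^sup>2) = 2 * log 2 (1 / (2 * \<beta>))"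
    using \<beta> by (simp add: log_nat_power)
  ultimately show ?thesis using log2_le_self[OF T] by linarith
qed

lemma weak_cost_ge_log_sensitivity:
  assumes alg: "q_alg n T m Us" and bias: "q_min_succ n m Us S f > 1/2"
    and z: "z \<in> inputs n" and I: "I \<subseteq> {..<n}" "I \<noteq> {}" and sens: "\<forall>i\<in>I. f (flip i z) \<noteq> f z"
  shows "log 2 (real (card I)) / 2 - 5/2 \<le> real T + log 2 (1 / (2 * (q_min_succ n m Us S f - 1/2)))"
proof -
  define \<beta> where "\<beta> = q_min_succ n m Us S f - 1/2"
  define c where "c = real (card I)"
  have c: "1 \<le> c" using I finite_subset[OF I(1)] unfolding c_def by (simp add: Suc_leI card_gt_0_iff)
  have "\<forall>x\<in>inputs n. 1/2 + \<beta> \<le> q_succ n m Us S f x"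
    unfolding \<beta>_def q_min_succ_def using finite_inputs by auto
  then have "(\<beta> * sqrt c) * sqrt c \<le> (sqrt 8 * real T) * sqrt c"
    using bias_mult_card_le[OF alg _ z I(1) sens] c unfolding c_def by (simp add: mult.assoc)
  then have "\<beta> * sqrt c \<le> sqrt 8 * real T"
    by (rule mult_right_le_imp_le) (use c in simp)
  moreover have "0 < \<beta>" using bias unfolding \<beta>_def by simp
  ultimately show ?thesis using log_inverse_bias_ge c unfolding \<beta>_def c_def by blast
qed

instance dtree :: countable by countable_datatype

definition dt_step :: "dtree \<Rightarrow> bool \<Rightarrow> dtree" where
  "dt_step T c = (case T of Leaf b \<Rightarrow> Leaf b | Query i t0 t1 \<Rightarrow> if c then t1 else t0)"

fun dt_var :: "dtree \<Rightarrow> nat" where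
  "dt_var (Leaf b) = 0"
| "dt_var (Query i t0 t1) = i"

text \<open>The answers are read off the bits of h, least significant first.\<close>

fun dt_follow :: "dtree \<Rightarrow> nat \<Rightarrow> nat \<Rightarrow> dtree" where
  "dt_follow T h 0 = T"
| "dt_follow (Leaf b) h (Suc t) = Leaf b"
| "dt_follow (Query i t0 t1) h (Suc t) = dt_follow (if odd h then t1 else t0) (h div 2) t"

fun dt_walk :: "dtree \<Rightarrow> bool list \<Rightarrow> nat \<Rightarrow> dtree" where
  "dt_walk T x 0 = T"
| "dt_walk (Leaf b) x (Suc t) = Leaf b"
| "dt_walk (Query i t0 t1) x (Suc t) = dt_walk (if x ! i then t1 else t0) x t"

lemma dt_follow_Suc: "dt_follow T h (Suc t) = dt_step (dt_follow T h t) (odd (h div 2 ^ t))"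
proof (induction t arbitrary: T h)
  case 0
  then show ?case by (cases T) (auto simp: dt_step_def)
next
  case (Suc t)
  show ?case
  proof (cases T)
    case (Query i t0 t1)
    let ?c = "if odd h then t1 else t0"
    have "dt_follow T h (Suc (Suc t)) = dt_step (dt_follow ?c (h div 2) t) (odd (h div 2 div 2 ^ t))"
      using Query Suc.IH by simp
    also have "h div 2 div 2 ^ t = h div 2 ^ Suc t" by (simp add: div_mult2_eq)
    finally show ?thesis using Query by simp
  qed (simp add: dt_step_def)
qed

lemma dt_walk_Suc: "dt_walk T x (Suc t) = dt_step (dt_walk T x t) (x ! dt_var (dt_walk T x t))"
proof (induction t arbitrary: T)
  case 0
  then show ?case by (cases T) (auto simp: dt_step_def)
next
  case (Suc t)
  show ?case
  proof (cases T)
    case (Query i t0 t1)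
    let ?c = "if x ! i then t1 else t0"
    have "dt_walk T x (Suc (Suc t)) = dt_step (dt_walk ?c x t) (x ! dt_var (dt_walk ?c x t))"
      using Query Suc.IH by simp
    then show ?thesis using Query by simp
  qed (simp add: dt_step_def)
qed

lemma dt_follow_cong_mod: "h mod 2 ^ t = h' mod 2 ^ t \<Longrightarrow> dt_follow T h t = dt_follow T h' t"
proof (induction t arbitrary: T h h')
  case (Suc t)
  have low: "k mod 2 = k mod 2 ^ Suc t mod 2" and high: "k div 2 mod 2 ^ t = k mod 2 ^ Suc t div 2"
    for k :: nat
    by (simp_all add: mod_mult2_eq)
  have parity: "odd h = odd h'" using low[of h] low[of h'] Suc.prems by (simp add: odd_iff_mod_2_eq_one)
  have "h div 2 mod 2 ^ t = h' div 2 mod 2 ^ t" using high[of h] high[of h'] Suc.prems by simp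
  then have "dt_follow T' (h div 2) t = dt_follow T' (h' div 2) t" for T' by (rule Suc.IH)
  with parity show ?case by (cases T) simp_all
qed simp

lemma dt_walk_depth: "dt_depth T \<le> t \<Longrightarrow> dt_walk T x t = Leaf (dt_eval T x)"
proof (induction T arbitrary: t)
  case (Leaf b)
  then show ?case by (cases t) auto
next
  case (Query i t0 t1)
  then obtain t' where "t = Suc t'" by (cases t) auto
  then show ?case using Query by auto
qed

lemma dt_vars_dt_walk: "dt_vars (dt_walk T x t) \<subseteq> dt_vars T"
proof (induction t arbitrary: T)
  case (Suc t)
  then show ?case by (cases T) auto
qed simp

fun trees_upto :: "nat \<Rightarrow> nat \<Rightarrow> dtree set" where
  "trees_upto n 0 = range Leaf"
| "trees_upto n (Suc q) = range Leaf \<union> (\<lambda>(i, a, b). Query i a b) ` ({..<n} \<times> trees_upto n q \<times> trees_upto n q)"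

lemma finite_trees_upto: "finite (trees_upto n q)"
  by (induction q) auto

lemma mem_trees_upto: "dt_depth T \<le> q \<Longrightarrow> dt_vars T \<subseteq> {..<n} \<Longrightarrow> T \<in> trees_upto n q"
proof (induction T arbitrary: q)
  case (Leaf b)
  then show ?case by (cases q) auto
next
  case (Query i t0 t1)
  then obtain q' where q: "q = Suc q'" by (cases q) auto
  with Query have "(i, t0, t1) \<in> {..<n} \<times> trees_upto n q' \<times> trees_upto n q'" by auto
  then have "Query i t0 t1 \<in> (\<lambda>(i, a, b). Query i a b) ` ({..<n} \<times> trees_upto n q' \<times> trees_upto n q')"
    by force
  then show ?case unfolding q by simp
qed

lemma cl_alg_finite_support: "cl_alg n q D \<Longrightarrow> finite (set_pmf D)"
  unfolding cl_alg_def
  by (rule finite_subset[OF _ finite_trees_upto[of n q]]) (auto intro: mem_trees_upto)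

definition replace_bit :: "nat \<Rightarrow> nat \<Rightarrow> nat \<Rightarrow> nat" where
  "replace_bit h t b = h div 2 ^ Suc t * 2 ^ Suc t + b * 2 ^ t + h mod 2 ^ t"

lemma replace_bit_eq: "replace_bit h t b = (h div 2 ^ Suc t * 2 + b) * 2 ^ t + h mod 2 ^ t"
  unfolding replace_bit_def by (simp add: algebra_simps)

lemma replace_bit_mod: "replace_bit h t b mod 2 ^ t = h mod 2 ^ t"
  unfolding replace_bit_eq by simp

lemma replace_bit_div: "b < 2 \<Longrightarrow> replace_bit h t b div 2 ^ t = h div 2 ^ Suc t * 2 + b"
  unfolding replace_bit_eq by simp

lemma replace_bit_bit: "b < 2 \<Longrightarrow> replace_bit h t b div 2 ^ t mod 2 = b"
  by (simp add: replace_bit_div)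

lemma replace_bit_replace_bit: "b < 2 \<Longrightarrow> replace_bit (replace_bit h t b) t (h div 2 ^ t mod 2) = h"
proof -
  assume b: "b < 2"
  have "replace_bit h t b div 2 ^ Suc t = replace_bit h t b div 2 ^ t div 2"
    by (metis div_mult2_eq power_Suc2)
  then have hi: "replace_bit h t b div 2 ^ Suc t = h div 2 ^ Suc t"
    using b by (simp add: replace_bit_div)
  have "h = h div 2 ^ t * 2 ^ t + h mod 2 ^ t" by (rule div_mult_mod_eq[symmetric])
  also have "h div 2 ^ t = h div 2 ^ Suc t * 2 + h div 2 ^ t mod 2"
    by (simp add: div_mult2_eq mult.commute[of 2])
  finally show ?thesis
    unfolding replace_bit_def[of "replace_bit h t b"] hi replace_bit_mod by (simp add: algebra_simps)
qed

lemma replace_bit_less: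
  assumes "h < 2 ^ q" "t < q" "b < 2"
  shows "replace_bit h t b < 2 ^ q"
proof -
  have "q - Suc t + Suc t = q" using assms(2) by simp
  then have e: "2 ^ (q - Suc t) * 2 ^ Suc t = (2::nat) ^ q" by (metis power_add)
  then have hi: "h div 2 ^ Suc t < 2 ^ (q - Suc t)"
    using assms(1) by (intro less_mult_imp_div_less) simp
  have lo: "b * 2 ^ t + h mod 2 ^ t < 2 ^ Suc t"
  proof -
    have "h mod 2 ^ t < 2 ^ t" "b * 2 ^ t \<le> 1 * 2 ^ t" "(2::nat) ^ Suc t = 2 ^ t + 2 ^ t"
      using assms(3) by (simp_all del: mult_1)
    then show ?thesis by linarith
  qed
  have "replace_bit h t b < (h div 2 ^ Suc t + 1) * 2 ^ Suc t"
    using lo unfolding replace_bit_def by (simp add: algebra_simps)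
  also have "\<dots> \<le> 2 ^ (q - Suc t) * 2 ^ Suc t"
    using hi by (intro mult_right_mono) simp_all
  finally show ?thesis unfolding e .
qed

lemma replace_bit_low: "h < 2 ^ t \<Longrightarrow> replace_bit h t b = h + b * 2 ^ t"
  unfolding replace_bit_def by simp

section \<open>Quantum simulation of randomized decision trees\<close>

definition query_idx :: "nat \<Rightarrow> dtree \<Rightarrow> nat" where
  "query_idx n T = (if dt_var T < n then dt_var T else 0)"

lemma query_idx_less: "0 < n \<Longrightarrow> query_idx n T < n"
  by (simp add: query_idx_def)

lemma dt_step_query_idx: "dt_vars T \<subseteq> {..<n} \<Longrightarrow> dt_step T (x ! query_idx n T) = dt_step T (x ! dt_var T)"
  by (cases T) (auto simp: query_idx_def dt_step_def)

text \<open>The simulation draws the tree in superposition and runs all trees in parallel. A basis index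
  basis_idx ws i b (r + R * h) records the query register i, the answer register b, the number r of
  the tree drawn (via to_nat) and the answers h received so far (bit t holds the t-th answer).
  Round t swaps b with bit t of h, which is still 0 on the states that occur, and moves i from the
  t-th to the next query index by a transposition; both are reversible, so each round permutes
  the basis.\<close>

locale classical_sim =
  fixes n q :: nat and D :: "dtree pmf"
  assumes alg: "cl_alg n q D" and n_pos: "0 < n"
begin

definition "R = Suc (Max (to_nat ` set_pmf D))"
definition "ws = R * 2 ^ q"
definition "next_query t r h = query_idx n (dt_follow (from_nat r) h t)"

definition "round_perm t e =
  (let i = e div (2 * ws); b = e mod (2 * ws) div ws; z = e mod ws; r = z mod R; h = z div R;
       h' = replace_bit h t b
   in basis_idx ws (Transposition.transpose (next_query t r h) (next_query (Suc t) r h') i)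
        (h div 2 ^ t mod 2) (r + R * h'))"

definition "start_idx r = basis_idx ws (next_query 0 r 0) 0 r"
definition "init_amp e = (\<Sum>T\<in>set_pmf D. if e = start_idx (to_nat T) then sqrt (pmf D T) else 0)"
definition "accept_set = {e. dt_follow (from_nat (e mod ws mod R)) (e mod ws div R) q = Leaf True}"

definition "on_track T x t e \<longleftrightarrow>
  (\<exists>h < 2 ^ t. dt_follow T h t = dt_walk T x t \<and> e = basis_idx ws (next_query t (to_nat T) h) 0 (to_nat T + R * h))"

lemma finite_support: "finite (set_pmf D)"
  by (rule cl_alg_finite_support[OF alg])

lemma support_less_R: "T \<in> set_pmf D \<Longrightarrow> to_nat T < R"
  unfolding R_def using finite_support by (simp add: le_imp_less_Suc)

lemma ws_pos: "0 < ws"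
  unfolding ws_def R_def by simp

lemma next_query_less: "next_query t r h < n"
  unfolding next_query_def by (rule query_idx_less[OF n_pos])

lemma workspace_less: "r < R \<Longrightarrow> h < 2 ^ q \<Longrightarrow> r + R * h < ws"
proof -
  assume r: "r < R" and h: "h < 2 ^ q"
  have "r + R * h < R * (h + 1)" using r by simp
  also have "\<dots> \<le> R * 2 ^ q" using h by (intro mult_left_mono) auto
  finally show ?thesis unfolding ws_def .
qed

lemma workspace_cases:
  assumes "z < ws"
  obtains r h where "z = r + R * h" "r < R" "h < 2 ^ q"
proof
  show "z = z mod R + R * (z div R)" by simp
  show "z mod R < R" unfolding R_def by simp
  show "z div R < 2 ^ q" using assms unfolding ws_def by (simp add: less_mult_imp_div_less mult.commute)
qed

lemma round_perm_basis_idx: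
  assumes t: "t < q" and i: "i < n" and b: "b < 2" and r: "r < R" and h: "h < 2 ^ q"
  shows "round_perm t (basis_idx ws i b (r + R * h)) =
    basis_idx ws (Transposition.transpose (next_query t r h) (next_query (Suc t) r (replace_bit h t b)) i)
      (h div 2 ^ t mod 2) (r + R * replace_bit h t b)"
  using basis_idx_decode[OF b workspace_less[OF r h]] r unfolding round_perm_def Let_def by simp

lemma round_perm_cases:
  assumes "e < n * (2 * ws)"
  obtains i b r h where "e = basis_idx ws i b (r + R * h)" "i < n" "b < 2" "r < R" "h < 2 ^ q"
  using basis_idx_cases[OF ws_pos assms] workspace_cases by metis

lemma round_perm_less:
  assumes "t < q" "e < n * (2 * ws)"
  shows "round_perm t e < n * (2 * ws)"
proof -
  obtain i b r h where e: "e = basis_idx ws i b (r + R * h)" "i < n" "b < 2" "r < R" "h < 2 ^ q"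
    using assms(2) by (rule round_perm_cases)
  have "replace_bit h t b < 2 ^ q" using replace_bit_less e(5) assms(1) e(3) .
  moreover have "Transposition.transpose (next_query t r h) (next_query (Suc t) r (replace_bit h t b)) i < n"
    using e(2) next_query_less by (simp add: Transposition.transpose_def)
  ultimately show ?thesis
    unfolding e(1) round_perm_basis_idx[OF assms(1) e(2-5)] using e(4)
    by (intro basis_idx_less workspace_less) simp_all
qed

lemma inj_on_round_perm:
  assumes t: "t < q"
  shows "inj_on (round_perm t) {..<n * (2 * ws)}"
proof (rule inj_onI)
  fix e1 e2 assume "e1 \<in> {..<n * (2 * ws)}" "e2 \<in> {..<n * (2 * ws)}" and eq: "round_perm t e1 = round_perm t e2"
  obtain i1 b1 r1 h1 where e1: "e1 = basis_idx ws i1 b1 (r1 + R * h1)" "i1 < n" "b1 < 2" "r1 < R" "h1 < 2 ^ q"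
    using \<open>e1 \<in> {..<n * (2 * ws)}\<close> round_perm_cases by blast
  obtain i2 b2 r2 h2 where e2: "e2 = basis_idx ws i2 b2 (r2 + R * h2)" "i2 < n" "b2 < 2" "r2 < R" "h2 < 2 ^ q"
    using \<open>e2 \<in> {..<n * (2 * ws)}\<close> round_perm_cases by blast
  let ?h1 = "replace_bit h1 t b1" and ?h2 = "replace_bit h2 t b2"
  have "?h1 < 2 ^ q" "?h2 < 2 ^ q" using replace_bit_less t e1(5,3) e2(5,3) by auto
  then have z: "r1 + R * ?h1 < ws" "r2 + R * ?h2 < ws" using e1(4) e2(4) workspace_less by auto
  have c: "h1 div 2 ^ t mod 2 < 2" "h2 div 2 ^ t mod 2 < 2" by simp_all
  note eq' = eq[unfolded e1(1) e2(1) round_perm_basis_idx[OF t e1(2-5)] round_perm_basis_idx[OF t e2(2-5)]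
      basis_idx_inject[OF c(1) z(1) c(2) z(2)]]
  have wseq: "r1 + R * ?h1 = r2 + R * ?h2" and bit: "h1 div 2 ^ t mod 2 = h2 div 2 ^ t mod 2"
    using eq' by simp_all
  have r: "r1 = r2" using arg_cong[OF wseq, of "\<lambda>z. z mod R"] e1(4) e2(4) by simp
  have hh: "?h1 = ?h2" using arg_cong[OF wseq, of "\<lambda>z. z div R"] e1(4) e2(4) by simp
  have "b1 = b2" using replace_bit_bit[OF e1(3), of h1 t] replace_bit_bit[OF e2(3), of h2 t] hh by simp
  moreover have "h1 = h2"
    using replace_bit_replace_bit[OF e1(3), of h1 t] replace_bit_replace_bit[OF e2(3), of h2 t] hh bit by metis
  moreover have "i1 = i2" using eq' r hh \<open>h1 = h2\<close> transpose_eq_imp_eq by simp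
  ultimately show "e1 = e2" using e1(1) e2(1) r by simp
qed

lemma bij_betw_round_perm:
  assumes "t < q"
  shows "bij_betw (round_perm t) {..<n * (2 * ws)} {..<n * (2 * ws)}"
proof -
  have "round_perm t ` {..<n * (2 * ws)} \<subseteq> {..<n * (2 * ws)}" using round_perm_less[OF assms] by auto
  then show ?thesis
    using inj_on_round_perm[OF assms] by (simp add: bij_betw_def endo_inj_surj)
qed

lemma on_track_start: "on_track T x 0 (start_idx (to_nat T))"
  unfolding on_track_def start_idx_def by (rule exI[of _ 0]) simp

lemma on_track_round:
  assumes T: "T \<in> set_pmf D" and t: "t < q" and track: "on_track T x t e"
  shows "on_track T x (Suc t) (round_perm t (qop_perm ws x e))"
proof -
  let ?r = "to_nat T"
  from track obtain h where h: "h < 2 ^ t" and path: "dt_follow T h t = dt_walk T x t"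
    and e: "e = basis_idx ws (next_query t ?r h) 0 (?r + R * h)" unfolding on_track_def by blast
  have r: "?r < R" by (rule support_less_R[OF T])
  have hq: "h < 2 ^ q" using h t by (meson less_le_trans one_le_numeral power_increasing less_imp_le)
  let ?i = "next_query t ?r h"
  let ?a = "if x ! ?i then 1 else 0 :: nat"
  let ?h' = "replace_bit h t ?a"
  have h': "?h' = h + ?a * 2 ^ t" by (rule replace_bit_low[OF h])
  have "round_perm t (qop_perm ws x e) = round_perm t (basis_idx ws ?i ?a (?r + R * h))"
    unfolding e using workspace_less[OF r hq] by (simp add: qop_perm_basis_idx)
  also have "\<dots> = basis_idx ws (next_query (Suc t) ?r ?h') 0 (?r + R * ?h')"
    using h by (simp add: round_perm_basis_idx[OF t next_query_less _ r hq] transpose_apply_first)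
  finally have e': "round_perm t (qop_perm ws x e) = \<dots>" .
  have vars: "dt_vars (dt_walk T x t) \<subseteq> {..<n}"
    using dt_vars_dt_walk alg T unfolding cl_alg_def by blast
  have "dt_follow T ?h' t = dt_walk T x t"
    using dt_follow_cong_mod[OF replace_bit_mod] path by simp
  moreover have "odd (?h' div 2 ^ t) = x ! ?i" using h unfolding h' by simp
  moreover have "?i = query_idx n (dt_walk T x t)" unfolding next_query_def using path by simp
  ultimately have "dt_follow T ?h' (Suc t) = dt_walk T x (Suc t)"
    by (simp add: dt_follow_Suc dt_walk_Suc dt_step_query_idx[OF vars])
  moreover have "?h' < 2 ^ Suc t" unfolding h' using h by auto
  ultimately show ?thesis unfolding on_track_def e' by blast
qed

lemma on_track_rounds:
  assumes T: "T \<in> set_pmf D"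
  shows "t \<le> q \<Longrightarrow> on_track T x t e \<Longrightarrow> on_track T x q (perm_steps (qop_perm ws x) (map round_perm [t..<q]) e)"
proof (induction "q - t" arbitrary: t e)
  case (Suc k)
  then have t: "t < q" by simp
  have "[t..<q] = t # [Suc t..<q]" using t by (simp add: upt_conv_Cons)
  then show ?case
    using Suc.hyps(1)[of "Suc t"] Suc.hyps(2) t on_track_round[OF T t Suc.prems(2)] by simp
qed simp

lemma on_track_accept:
  assumes T: "T \<in> set_pmf D" and track: "on_track T x q e"
  shows "e \<in> accept_set \<longleftrightarrow> dt_eval T x"
proof -
  let ?r = "to_nat T"
  from track obtain h where h: "h < 2 ^ q" and path: "dt_follow T h q = dt_walk T x q"
    and e: "e = basis_idx ws (next_query q ?r h) 0 (?r + R * h)" unfolding on_track_def by blast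
  have r: "?r < R" by (rule support_less_R[OF T])
  have "e mod ws = ?r + R * h"
    unfolding e using workspace_less[OF r h] by (simp add: basis_idx_decode)
  then have "dt_follow (from_nat (e mod ws mod R)) (e mod ws div R) q = dt_walk T x q"
    using r path by simp
  also have "\<dots> = Leaf (dt_eval T x)"
    using alg T unfolding cl_alg_def by (intro dt_walk_depth) blast
  finally show ?thesis unfolding accept_set_def by simp
qed

lemma start_idx_mod: "T \<in> set_pmf D \<Longrightarrow> start_idx (to_nat T) mod ws = to_nat T"
  using workspace_less[OF support_less_R, of T 0] unfolding start_idx_def by (simp add: basis_idx_decode)

lemma start_idx_less: "T \<in> set_pmf D \<Longrightarrow> start_idx (to_nat T) < n * (2 * ws)"
  using workspace_less[OF support_less_R, of T 0] next_query_less unfolding start_idx_def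
  by (intro basis_idx_less) auto

lemma inj_on_start_idx: "inj_on (\<lambda>T. start_idx (to_nat T)) (set_pmf D)"
  by (rule inj_onI) (metis start_idx_mod to_nat_split)

lemma init_amp_start:
  assumes T: "T \<in> set_pmf D"
  shows "init_amp (start_idx (to_nat T)) = sqrt (pmf D T)"
proof -
  have "init_amp (start_idx (to_nat T)) = (\<Sum>T'\<in>set_pmf D. if T' = T then sqrt (pmf D T') else 0)"
    unfolding init_amp_def
    by (rule sum.cong) (use inj_on_start_idx T in \<open>auto dest: inj_onD\<close>)
  then show ?thesis using finite_support T by simp
qed

lemma sum_init_amp_sq:
  "(\<Sum>e\<in>A \<inter> {..<n * (2 * ws)}. (init_amp e)\<^sup>2) = (\<Sum>T\<in>{T\<in>set_pmf D. start_idx (to_nat T) \<in> A}. pmf D T)"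
proof -
  let ?B = "{T\<in>set_pmf D. start_idx (to_nat T) \<in> A}"
  have "(\<Sum>e\<in>A \<inter> {..<n * (2 * ws)}. (init_amp e)\<^sup>2) = (\<Sum>e\<in>(\<lambda>T. start_idx (to_nat T)) ` ?B. (init_amp e)\<^sup>2)"
  proof (rule sum.mono_neutral_right)
    show "(\<lambda>T. start_idx (to_nat T)) ` ?B \<subseteq> A \<inter> {..<n * (2 * ws)}" using start_idx_less by auto
    show "\<forall>e\<in>A \<inter> {..<n * (2 * ws)} - (\<lambda>T. start_idx (to_nat T)) ` ?B. (init_amp e)\<^sup>2 = 0"
      unfolding init_amp_def by (auto intro!: sum.neutral)
  qed simp
  also have "\<dots> = (\<Sum>T\<in>?B. (init_amp (start_idx (to_nat T)))\<^sup>2)"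
    by (rule sum.reindex_cong[OF inj_on_subset[OF inj_on_start_idx]]) auto
  also have "\<dots> = (\<Sum>T\<in>?B. pmf D T)" by (rule sum.cong) (simp_all add: init_amp_start)
  finally show ?thesis .
qed

lemma sum_init_amp_sq_eq_1: "(\<Sum>e<n * (2 * ws). (init_amp e)\<^sup>2) = 1"
  using sum_init_amp_sq[of UNIV] sum_pmf_eq_1[OF finite_support] by simp

definition "init_unitary = (SOME U. is_unitary (n * (2 * ws)) U \<and>
  U *\<^sub>v unit_vec (n * (2 * ws)) 0 = Matrix.vec (n * (2 * ws)) (\<lambda>j. complex_of_real (init_amp j)))"

lemma init_unitary:
  "is_unitary (n * (2 * ws)) init_unitary"
  "init_unitary *\<^sub>v unit_vec (n * (2 * ws)) 0 = Matrix.vec (n * (2 * ws)) (\<lambda>j. complex_of_real (init_amp j))"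
proof -
  have "0 < n * (2 * ws)" using n_pos ws_pos by simp
  from unitary_with_first_column[OF this sum_init_amp_sq_eq_1]
  show "is_unitary (n * (2 * ws)) init_unitary"
    "init_unitary *\<^sub>v unit_vec (n * (2 * ws)) 0 = Matrix.vec (n * (2 * ws)) (\<lambda>j. complex_of_real (init_amp j))"
    unfolding init_unitary_def by (metis (mono_tags, lifting) someI)+
qed

definition "sim_unitaries = init_unitary # map (perm_mat (n * (2 * ws))) (map round_perm [0..<q])"

lemma q_alg_sim: "q_alg n q ws sim_unitaries"
  unfolding q_alg_def sim_unitaries_def qdim_eq
  using ws_pos init_unitary(1) perm_mat_unitary bij_betw_round_perm by auto

lemma q_prob1_sim: "q_prob1 n ws sim_unitaries accept_set x = measure_pmf.prob D {T. dt_eval T x}"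
proof -
  let ?d = "n * (2 * ws)"
  let ?steps = "perm_steps (qop_perm ws x) (map round_perm [0..<q])"
  let ?u = "Matrix.vec ?d (\<lambda>j. complex_of_real (init_amp j))"
  have "q_prob1 n ws sim_unitaries accept_set x
      = basis_prob ?d accept_set (qsteps (perm_mat ?d (qop_perm ws x)) (map (perm_mat ?d) (map round_perm [0..<q])) ?u)"
    unfolding sim_unitaries_def q_prob1_qsteps qdim_eq qop_eq_perm_mat init_unitary(2) by simp
  also have "\<dots> = basis_prob ?d {e. ?steps e \<in> accept_set} ?u"
    by (rule basis_prob_qsteps_perm) (use bij_betw_qop_perm[OF ws_pos] bij_betw_round_perm in auto)
  also have "\<dots> = (\<Sum>e\<in>{e. ?steps e \<in> accept_set} \<inter> {..<?d}. (init_amp e)\<^sup>2)"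
    unfolding basis_prob_def by (rule sum.cong) auto
  also have "\<dots> = (\<Sum>T\<in>{T\<in>set_pmf D. ?steps (start_idx (to_nat T)) \<in> accept_set}. pmf D T)"
    by (simp add: sum_init_amp_sq)
  also have "{T\<in>set_pmf D. ?steps (start_idx (to_nat T)) \<in> accept_set} = set_pmf D \<inter> {T. dt_eval T x}"
    using on_track_accept[OF _ on_track_rounds[OF _ _ on_track_start]] by auto
  also have "(\<Sum>T\<in>set_pmf D \<inter> {T. dt_eval T x}. pmf D T) = measure_pmf.prob D (set_pmf D \<inter> {T. dt_eval T x})"
    using finite_support by (simp add: measure_measure_pmf_finite)
  also have "\<dots> = measure_pmf.prob D {T. dt_eval T x}"
    using measure_Int_set_pmf[of D "{T. dt_eval T x}"] by (simp add: Int_commute)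
  finally show ?thesis .
qed

end

lemma cl_succ_complement:
  "cl_succ D f x = (if f x then measure_pmf.prob D {T. dt_eval T x} else 1 - measure_pmf.prob D {T. dt_eval T x})"
proof (cases "f x")
  case False
  have "{T. dt_eval T x = f x} = space (measure_pmf D) - {T. dt_eval T x}" using False by auto
  moreover have "measure_pmf.prob D (space (measure_pmf D) - {T. dt_eval T x}) = 1 - measure_pmf.prob D {T. dt_eval T x}"
    by (rule measure_pmf.prob_compl) simp
  ultimately show ?thesis using False unfolding cl_succ_def by simp
qed (simp add: cl_succ_def)

lemma quantum_simulation:
  assumes "cl_alg n q D" "0 < n"
  obtains m Us S where "q_alg n q m Us" "\<And>x. q_succ n m Us S f x = cl_succ D f x"
proof -
  interpret classical_sim n q D using assms by unfold_locales
  show ?thesis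
  proof (rule that[OF q_alg_sim])
    show "q_succ n ws sim_unitaries accept_set f x = cl_succ D f x" for x
      using q_prob1_sim by (simp add: q_succ_def cl_succ_complement)
  qed
qed

lemma cl_min_succ_le: "x \<in> inputs n \<Longrightarrow> cl_min_succ n f D \<le> cl_succ D f x"
  unfolding cl_min_succ_def using finite_inputs by simp

lemma cl_min_succ_le_1: "cl_min_succ n f D \<le> 1"
  using cl_min_succ_le[OF replicate_in_inputs] unfolding cl_succ_def
  by (meson measure_pmf.prob_le_1 order_trans)

lemma q_min_succ_le: "x \<in> inputs n \<Longrightarrow> q_min_succ n m Us S f \<le> q_succ n m Us S f x"
  unfolding q_min_succ_def using finite_inputs by simp

lemma q_min_succ_le_1:
  assumes "q_alg n q m Us" "0 < n"
  shows "q_min_succ n m Us S f \<le> 1"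
proof -
  have "q_succ n m Us S f x \<le> 1" for x
    using q_prob1_bounds[OF assms] unfolding q_succ_def by simp
  then show ?thesis using q_min_succ_le[OF replicate_in_inputs] order_trans by blast
qed

lemma weak_cost_nonneg:
  assumes "1/2 < p" "p \<le> 1"
  shows "0 \<le> real q + log 2 (1 / (2 * (p - 1/2)))"
proof -
  have "0 < 1 / (2 * (p - 1/2))" "1 \<le> 1 / (2 * (p - 1/2))" using assms by (simp_all add: field_simps)
  then have "0 \<le> log 2 (1 / (2 * (p - 1/2)))" by (subst zero_le_log_cancel_iff) auto
  then show ?thesis by simp
qed

lemma WUC_le_cost:
  assumes "cl_alg n q D" "cl_min_succ n f D > 1/2"
  shows "WUC n f \<le> real q + log 2 (1 / (2 * (cl_min_succ n f D - 1/2)))"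
  unfolding WUC_def
proof (rule cInf_lower)
  show "bdd_below {real q + log 2 (1 / (2 * (cl_min_succ n f D - 1/2))) | q D.
      cl_alg n q D \<and> cl_min_succ n f D > 1/2}"
  proof (rule bdd_belowI)
    fix v assume "v \<in> {real q + log 2 (1 / (2 * (cl_min_succ n f D - 1/2))) | q D.
      cl_alg n q D \<and> cl_min_succ n f D > 1/2}"
    then obtain q D where v: "v = real q + log 2 (1 / (2 * (cl_min_succ n f D - 1/2)))"
      and "cl_min_succ n f D > 1/2" by blast
    then show "0 \<le> v" using weak_cost_nonneg cl_min_succ_le_1 by blast
  qed
qed (use assms in blast)

lemma WUQ_le_WUC:
  assumes n: "0 < n" and alg: "cl_alg n q D" and bias: "cl_min_succ n f D > 1/2"
  shows "WUQ n f \<le> WUC n f"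
proof -
  let ?Q = "{real q + log 2 (1 / (2 * (q_min_succ n m Us S f - 1/2))) | q m Us S.
              q_alg n q m Us \<and> q_min_succ n m Us S f > 1/2}"
  let ?C = "{real q + log 2 (1 / (2 * (cl_min_succ n f D - 1/2))) | q D.
              cl_alg n q D \<and> cl_min_succ n f D > 1/2}"
  have sub: "?C \<subseteq> ?Q"
  proof
    fix v assume "v \<in> ?C"
    then obtain q D where v: "v = real q + log 2 (1 / (2 * (cl_min_succ n f D - 1/2)))"
      and D: "cl_alg n q D" "cl_min_succ n f D > 1/2" by blast
    obtain m Us S where Q: "q_alg n q m Us" and succ: "\<And>x. q_succ n m Us S f x = cl_succ D f x"
      using quantum_simulation[OF D(1) n] by metis
    have "q_min_succ n m Us S f = cl_min_succ n f D"
      unfolding q_min_succ_def cl_min_succ_def succ ..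
    then have "v = real q + log 2 (1 / (2 * (q_min_succ n m Us S f - 1/2)))"
      and "q_min_succ n m Us S f > 1/2" using v D(2) by simp_all
    with Q show "v \<in> ?Q" by blast
  qed
  have bdd: "bdd_below ?Q"
  proof (rule bdd_belowI)
    fix v assume "v \<in> ?Q"
    then obtain q m Us S where v: "v = real q + log 2 (1 / (2 * (q_min_succ n m Us S f - 1/2)))"
      and Q: "q_alg n q m Us" "q_min_succ n m Us S f > 1/2" by blast
    show "0 \<le> v" unfolding v by (rule weak_cost_nonneg[OF Q(2) q_min_succ_le_1[OF Q(1) n]])
  qed
  have "?C \<noteq> {}" using alg bias by blast
  then show ?thesis unfolding WUQ_def WUC_def by (rule cInf_superset_mono[OF _ bdd sub])
qed

lemma cl_succ_no_queries:
  assumes "cl_alg n 0 D" "f x \<noteq> f y"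
  shows "cl_succ D f x + cl_succ D f y = 1"
proof -
  have "dt_eval T x = dt_eval T y" if "T \<in> set_pmf D" for T
    using assms(1) that unfolding cl_alg_def by (cases T) auto
  then have "measure_pmf.prob D {T. dt_eval T y} = measure_pmf.prob D {T. dt_eval T x}"
    by (intro measure_pmf.finite_measure_eq_AE AE_pmfI) auto
  then show ?thesis using assms(2) by (simp add: cl_succ_complement)
qed

lemma q_succ_no_queries:
  assumes "q_alg n 0 m Us" "f x \<noteq> f y"
  shows "q_succ n m Us S f x + q_succ n m Us S f y = 1"
proof -
  obtain U where "Us = [U]" using assms(1) unfolding q_alg_def by (cases Us) auto
  then have "q_prob1 n m Us S x = q_prob1 n m Us S y" unfolding q_prob1_def by simp
  then show ?thesis using assms(2) unfolding q_succ_def by auto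
qed

lemma UC_eq_1:
  assumes alg: "cl_alg n 1 D" and succ: "\<forall>x\<in>inputs n. cl_succ D f x > 1/2"
    and x: "x \<in> inputs n" and y: "y \<in> inputs n" and xy: "f x \<noteq> f y"
  shows "UC n f = 1"
  unfolding UC_def
proof (rule Least_equality)
  show "\<exists>D. cl_alg n 1 D \<and> (\<forall>x\<in>inputs n. cl_succ D f x > 1/2)" using alg succ by blast
  fix q assume "\<exists>D. cl_alg n q D \<and> (\<forall>x\<in>inputs n. cl_succ D f x > 1/2)"
  then obtain D' where "cl_alg n q D'" "cl_succ D' f x > 1/2" "cl_succ D' f y > 1/2" using x y by blast
  then show "1 \<le> q" using cl_succ_no_queries[of n D' f x y] xy by (cases q) auto
qed

lemma UQ_eq_1:
  assumes n: "0 < n" and alg: "cl_alg n 1 D" and succ: "\<forall>x\<in>inputs n. cl_succ D f x > 1/2"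
    and x: "x \<in> inputs n" and y: "y \<in> inputs n" and xy: "f x \<noteq> f y"
  shows "UQ n f = 1"
  unfolding UQ_def
proof (rule Least_equality)
  obtain m Us S where "q_alg n 1 m Us" "\<And>x. q_succ n m Us S f x = cl_succ D f x"
    using quantum_simulation[OF alg n] by metis
  then show "\<exists>m Us S. q_alg n 1 m Us \<and> (\<forall>x\<in>inputs n. q_succ n m Us S f x > 1/2)"
    using succ by (intro exI[of _ m] exI[of _ Us] exI[of _ S]) simp
  fix q assume "\<exists>m Us S. q_alg n q m Us \<and> (\<forall>x\<in>inputs n. q_succ n m Us S f x > 1/2)"
  then obtain m Us S where "q_alg n q m Us" "q_succ n m Us S f x > 1/2" "q_succ n m Us S f y > 1/2"
    using x y by blast
  then show "1 \<le> q" using q_succ_no_queries[of n m Us f x y S] xy by (cases q) auto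
qed

section \<open>Threshold functions\<close>

text \<open>The one-query algorithm picks one of TH_range n k positions uniformly; positions beyond n are
  constant leaves, the first TH_pad n k of them accepting. An input of weight w is then accepted with
  probability (w + TH_pad n k) / TH_range n k, which crosses 1/2 exactly between weights k and k + 1.\<close>

definition TH_pad :: "nat \<Rightarrow> nat \<Rightarrow> nat" where
  "TH_pad n k = n - (2 * k + 1)"

definition TH_range :: "nat \<Rightarrow> nat \<Rightarrow> nat" where
  "TH_range n k = 2 * (TH_pad n k + k) + 1"

definition TH_tree :: "nat \<Rightarrow> nat \<Rightarrow> nat \<Rightarrow> dtree" where
  "TH_tree n k j = (if j < n then Query j (Leaf False) (Leaf True) else Leaf (j < n + TH_pad n k))"

definition TH_alg :: "nat \<Rightarrow> nat \<Rightarrow> dtree pmf" where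
  "TH_alg n k = map_pmf (TH_tree n k) (pmf_of_set {..<TH_range n k})"

lemma TH_range_bounds: "k < n \<Longrightarrow> n \<le> TH_range n k \<and> TH_range n k \<le> 2 * n"
  unfolding TH_range_def TH_pad_def by auto

lemma cl_alg_TH_alg: "cl_alg n 1 (TH_alg n k)"
  unfolding cl_alg_def TH_alg_def TH_range_def by (auto simp: TH_tree_def)

lemma count_list_True: "count_list x True = card {j. j < length x \<and> x ! j}"
  by (simp add: count_list_eq_length_filter length_filter_conv_card)

lemma prob_TH_alg_accepts:
  assumes k: "k < n" and x: "length x = n"
  shows "measure_pmf.prob (TH_alg n k) {T. dt_eval T x}
    = real (count_list x True + TH_pad n k) / real (TH_range n k)"
proof -
  let ?L = "TH_range n k"
  have L: "n \<le> ?L" "n + TH_pad n k \<le> ?L" using k unfolding TH_range_def TH_pad_def by auto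
  have "{..<?L} \<inter> TH_tree n k -` {T. dt_eval T x} = {j. j < n \<and> x ! j} \<union> {n..<n + TH_pad n k}"
    using L by (auto simp: TH_tree_def)
  moreover have "card ({j. j < n \<and> x ! j} \<union> {n..<n + TH_pad n k}) = count_list x True + TH_pad n k"
    using x by (subst card_Un_disjoint) (auto simp: count_list_True)
  ultimately show ?thesis
    unfolding TH_alg_def measure_map_pmf using L k
    by (simp add: measure_pmf_of_set lessThan_empty_iff)
qed

lemma cl_succ_TH_alg:
  assumes k: "k < n" and x: "length x = n"
  shows "1/2 + 1 / (2 * real (TH_range n k)) \<le> cl_succ (TH_alg n k) (TH k) x"
proof -
  let ?a = "real (TH_pad n k)" and ?w = "real (count_list x True)" and ?L = "real (TH_range n k)"
  have L: "?L = 2 * (?a + k) + 1" unfolding TH_range_def by simp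
  have target: "1/2 + 1 / (2 * ?L) = (?a + k + 1) / ?L" unfolding L by (simp add: field_simps)
  have p: "measure_pmf.prob (TH_alg n k) {T. dt_eval T x} = (?w + ?a) / ?L"
    using prob_TH_alg_accepts[OF k x] by simp
  show ?thesis
  proof (cases "TH k x")
    case True
    then have "?a + k + 1 \<le> ?w + ?a" unfolding TH_def by simp
    then have "(?a + k + 1) / ?L \<le> (?w + ?a) / ?L" by (rule divide_right_mono) simp
    then show ?thesis using True p target by (simp add: cl_succ_complement)
  next
    case False
    then have "?a + k + 1 \<le> ?L - (?w + ?a)" unfolding TH_def L by simp
    then have "(?a + k + 1) / ?L \<le> (?L - (?w + ?a)) / ?L" by (rule divide_right_mono) simp
    also have "\<dots> = 1 - (?w + ?a) / ?L" unfolding L by (simp add: field_simps)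
    finally show ?thesis using False p target by (simp add: cl_succ_complement)
  qed
qed

lemma cl_min_succ_TH_alg:
  assumes "k < n"
  shows "1/2 + 1 / (2 * real (TH_range n k)) \<le> cl_min_succ n (TH k) (TH_alg n k)"
proof -
  have "inputs n \<noteq> {}" using replicate_in_inputs by blast
  then show ?thesis
    unfolding cl_min_succ_def using finite_inputs cl_succ_TH_alg[OF assms]
    by (subst Min_ge_iff) (auto simp: inputs_def)
qed

lemma count_list_replicate: "count_list (replicate n b) a = (if a = b then n else 0)"
  by (induction n) auto

lemma TH_distinguishes_constants:
  "k < n \<Longrightarrow> \<not> TH k (replicate n False) \<and> TH k (replicate n True)"
  by (simp add: TH_def count_list_replicate)

definition indicator_input :: "nat \<Rightarrow> nat set \<Rightarrow> bool list" where
  "indicator_input n A = map (\<lambda>j. j \<in> A) [0..<n]"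

lemma count_indicator_input:
  assumes "A \<subseteq> {..<n}"
  shows "count_list (indicator_input n A) True = card A"
proof -
  have "{j. j < length (indicator_input n A) \<and> indicator_input n A ! j} = A"
    using assms by (auto simp: indicator_input_def)
  then show ?thesis unfolding count_list_True by simp
qed

lemma flip_indicator_input:
  "i < n \<Longrightarrow> flip i (indicator_input n A) = indicator_input n (if i \<in> A then A - {i} else insert i A)"
  unfolding flip_def indicator_input_def by (rule nth_equalityI) (auto simp: nth_list_update)

text \<open>Weight k with the n - k zeros sensitive, or weight k + 1 with its k + 1 ones sensitive.\<close>

lemma TH_sensitive_input:
  assumes k: "k < n"
  obtains z I where "z \<in> inputs n" "I \<subseteq> {..<n}" "\<forall>i\<in>I. TH k (flip i z) \<noteq> TH k z"
    "real n \<le> 2 * real (card I)"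
proof (cases "2 * k + 1 \<le> n")
  case True
  let ?z = "indicator_input n {..<k}"
  have "TH k (flip i ?z) \<noteq> TH k ?z" if "i \<in> {k..<n}" for i
  proof -
    have "insert i {..<k} \<subseteq> {..<n}" "{..<k} \<subseteq> {..<n}" "i < n" "i \<notin> {..<k}" using that k by auto
    then show ?thesis by (simp add: flip_indicator_input count_indicator_input TH_def)
  qed
  moreover have "real n \<le> 2 * real (card {k..<n})" using True by simp
  ultimately show ?thesis
    by (intro that[of ?z "{k..<n}"]) (auto simp: inputs_def indicator_input_def)
next
  case False
  let ?z = "indicator_input n {..k}"
  have "TH k (flip i ?z) \<noteq> TH k ?z" if "i \<in> {..k}" for i
  proof -
    have "{..k} - {i} \<subseteq> {..<n}" "{..k} \<subseteq> {..<n}" "i < n" using that k by auto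
    then show ?thesis using that by (simp add: flip_indicator_input count_indicator_input TH_def)
  qed
  moreover have "real n \<le> 2 * real (card {..k})" using False by simp
  ultimately show ?thesis
    using k by (intro that[of ?z "{..k}"]) (auto simp: inputs_def indicator_input_def)
qed

lemma cl_min_succ_TH_alg_gt:
  assumes "k < n"
  shows "cl_min_succ n (TH k) (TH_alg n k) > 1/2"
proof -
  have "0 < 1 / (2 * real (TH_range n k))" using TH_range_bounds[OF assms] assms by simp
  then show ?thesis using cl_min_succ_TH_alg[OF assms] by linarith
qed

lemma cl_succ_TH_alg_gt: "k < n \<Longrightarrow> \<forall>x\<in>inputs n. cl_succ (TH_alg n k) (TH k) x > 1/2"
  using cl_min_succ_TH_alg_gt cl_min_succ_le by (meson less_le_trans)

lemma UC_TH: "k < n \<Longrightarrow> UC n (TH k) = 1"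
  using TH_distinguishes_constants
  by (intro UC_eq_1[OF cl_alg_TH_alg cl_succ_TH_alg_gt replicate_in_inputs replicate_in_inputs]) auto

lemma UQ_TH: "k < n \<Longrightarrow> UQ n (TH k) = 1"
  using TH_distinguishes_constants
  by (intro UQ_eq_1[OF _ cl_alg_TH_alg cl_succ_TH_alg_gt replicate_in_inputs replicate_in_inputs]) auto

lemma WUC_TH_le: 
  assumes k: "k < n"
  shows "WUC n (TH k) \<le> 2 + log 2 (real n)"
proof -
  define p where "p = cl_min_succ n (TH k) (TH_alg n k)"
  define L where "L = real (TH_range n k)"
  have L: "0 < L" "L \<le> 2 * real n" using TH_range_bounds[OF k] k unfolding L_def by auto
  have p: "1/2 < p" "1 / L \<le> 2 * (p - 1/2)"
    using cl_min_succ_TH_alg_gt[OF k] cl_min_succ_TH_alg[OF k] unfolding p_def L_def by auto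
  have "log 2 (1 / (2 * (p - 1/2))) \<le> log 2 L"
    using p L by (subst log_le_cancel_iff) (auto simp: field_simps)
  also have "\<dots> \<le> log 2 (2 * real n)" using L by (subst log_le_cancel_iff) auto
  also have "\<dots> = 1 + log 2 (real n)" using k by (simp add: log_mult)
  finally have cost: "real 1 + log 2 (1 / (2 * (p - 1/2))) \<le> 2 + log 2 (real n)" by simp
  have "WUC n (TH k) \<le> real 1 + log 2 (1 / (2 * (p - 1/2)))"
    unfolding p_def by (rule WUC_le_cost[OF cl_alg_TH_alg cl_min_succ_TH_alg_gt[OF k]])
  with cost show ?thesis by linarith
qed

lemma WUQ_TH_ge:
  assumes k: "k < n"
  shows "log 2 (real n) / 2 - 3 \<le> WUQ n (TH k)"
proof -
  obtain z I where z: "z \<in> inputs n" and I: "I \<subseteq> {..<n}" "\<forall>i\<in>I. TH k (flip i z) \<noteq> TH k z"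
    and card: "real n \<le> 2 * real (card I)"
    using TH_sensitive_input[OF k] by blast
  have "I \<noteq> {}" using card k by auto
  have "0 < card I" using \<open>I \<noteq> {}\<close> finite_subset[OF I(1)] by (simp add: card_gt_0_iff)
  have "log 2 (real n) - 1 = log 2 (real n / 2)" using k by (simp add: log_divide)
  also have "\<dots> \<le> log 2 (real (card I))"
    using card k \<open>0 < card I\<close> by (subst log_le_cancel_iff) auto
  finally have log_card: "log 2 (real n) - 1 \<le> log 2 (real (card I))" .
  obtain m Us S where alg: "q_alg n 1 m Us" and succ: "\<And>x. q_succ n m Us S (TH k) x = cl_succ (TH_alg n k) (TH k) x"
    using quantum_simulation[OF cl_alg_TH_alg] k by (metis not_less0 gr0I)
  have "q_min_succ n m Us S (TH k) > 1/2"
    using cl_min_succ_TH_alg_gt[OF k] unfolding q_min_succ_def cl_min_succ_def succ .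
  then have ne: "{real q + log 2 (1 / (2 * (q_min_succ n m Us S (TH k) - 1/2))) | q m Us S.
      q_alg n q m Us \<and> q_min_succ n m Us S (TH k) > 1/2} \<noteq> {}"
    using alg by blast
  show ?thesis
    unfolding WUQ_def
  proof (rule cInf_greatest[OF ne], clarify)
    fix q m Us S assume "q_alg n q m Us" "q_min_succ n m Us S (TH k) > 1/2"
    from weak_cost_ge_log_sensitivity[OF this z I(1) \<open>I \<noteq> {}\<close> I(2)] log_card
    show "log 2 (real n) / 2 - 3 \<le> real q + log 2 (1 / (2 * (q_min_succ n m Us S (TH k) - 1/2)))"
      by linarith
  qed
qed

theorem theorem6:
  shows "(\<forall>n k. 2 \<le> n \<and> k \<le> n - 1 \<longrightarrow> UC n (TH k) = 1 \<and> UQ n (TH k) = 1)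
       \<and> (\<exists>c1 c2 :: real. c1 > 0 \<and> c2 > 0 \<and> (\<exists>N. \<forall>n k. N \<le> n \<and> k \<le> n - 1 \<longrightarrow>
             c1 * log 2 n \<le> WUQ n (TH k) \<and> WUQ n (TH k) \<le> WUC n (TH k)
             \<and> WUC n (TH k) \<le> c2 * log 2 n))"
proof -
  have "UC n (TH k) = 1 \<and> UQ n (TH k) = 1" if "2 \<le> n \<and> k \<le> n - 1" for n k
  proof -
    have "k < n" using that by linarith
    then show ?thesis by (simp add: UC_TH UQ_TH)
  qed
  moreover have "1/4 * log 2 n \<le> WUQ n (TH k) \<and> WUQ n (TH k) \<le> WUC n (TH k) \<and> WUC n (TH k) \<le> 2 * log 2 n"
    if "4096 \<le> n \<and> k \<le> n - 1" for n k
  proof -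
    have k: "k < n" and n: "4096 \<le> real n" using that by linarith+
    have "log 2 4096 \<le> log 2 (real n)" using n by (subst log_le_cancel_iff) auto
    then have "12 \<le> log 2 (real n)" using log_pow_cancel[of 2 12] by simp
    moreover have "WUQ n (TH k) \<le> WUC n (TH k)"
      using k by (intro WUQ_le_WUC[OF _ cl_alg_TH_alg cl_min_succ_TH_alg_gt]) simp_all
    ultimately show ?thesis using WUQ_TH_ge[OF k] WUC_TH_le[OF k] by linarith
  qed
  ultimately show ?thesis by (intro conjI exI[of _ "1/4"] exI[of _ 2] exI[of _ 4096]) auto
qed

end
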